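(* Let $\gamma:K^*\to K$ be a non-degenerate simplicial dynamical system on an everywhere $d$-dimensional polyhedron $X$ ($d\ge1$), with associated p.l. map $g$ on $X$. Let $J:{}^dK^*\to{}^dK$ be the inclusion map and $G^*=J^{-1}\circ\gamma$ the associated relation on ${}^dK^*$. Then $$H_\gamma=\{(\mathbf{s}^*,x)\in{}^dK^*_{G^*}\times X: g^i(x)\in s^*_i\text{ for all } i\in\mathbb{Z}_+\}$$ is (the graph of) an almost one-to-one continuous map from ${}^dK^*_{G^*}$ onto $X$ which satisfies $H_\gamma\circ S=g\circ H_\gamma$.
   Context: Simplicial complexes, subdivisions, proper subdivisions (no simplex of $K^*$ meets two disjoint simplices of $K$), simplicial maps and associated p.l. maps $g(x)=\sum_vb_v(x)\gamma(v)$ are as usual. A simplicial dynamical system is a simplicial map $\gamma:K^*\to K$ with $K^*$ a proper subdivision of $K$; it is non-degenerate if $\dim\gamma(s^* )=\dim s^*$ for every simplex $s^*$ of $K^*$. A polyhedron is everywhere $d$-dimensional if it is a union of $d$-dimensional closed simplices. ${}^dK$ and ${}^dK^*$ denote the sets of $d$-simplices of $K$ and $K^*$; $J(s^* )$ is the unique $d$-simplex of $K$ containing $s^*$, and $\gamma$ restricts to a map ${}^dK^*\to{}^dK$. $(s_1^*,s_2^* )\in G^*$ iff $s_2^*\subset\gamma(s_1^* )$. For a relation $G^*$ on the finite set ${}^dK^*$, ${}^dK^*_{G^*}=\{\mathbf{s}^*\in({}^dK^* )^{\mathbb{Z}_+}:(s^*_i,s^*_{i+1})\in G^*\ \forall i\}$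 with the product topology and shift $S(\mathbf{s}^* )_i=s^*_{i+1}$. A continuous map $h$ is almost one-to-one if $\{y:h^{-1}(h(y))=\{y\}\}$ is dense in the domain. *)

theory Defs
  imports "HOL-Analysis.Analysis"
begin

text \<open>Simplices are represented by their (finite, affinely independent, nonempty)
vertex sets; the closed simplex is the convex hull of the vertex set.\<close>

definition simplicial_complex :: "'a::euclidean_space set set \<Rightarrow> bool" where
  "simplicial_complex K \<longleftrightarrow>
     finite K \<and>
     (\<forall>s\<in>K. finite s \<and> s \<noteq> {} \<and> \<not> affine_dependent s) \<and>
     (\<forall>s\<in>K. \<forall>t. t \<subseteq> s \<and> t \<noteq> {} \<longrightarrow> t \<in> K) \<and>
     (\<forall>s\<in>K. \<forall>t\<in>K. convex hull s \<inter> convex hull t = convex hull (s \<inter> t))"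

definition vertices :: "'a set set \<Rightarrow> 'a set" where
  "vertices K = \<Union>K"

definition polyhedron :: "'a::euclidean_space set set \<Rightarrow> 'a set" where
  "polyhedron K = (\<Union>s\<in>K. convex hull s)"

definition dsimplices :: "nat \<Rightarrow> 'a set set \<Rightarrow> 'a set set" where
  "dsimplices d K = {s\<in>K. card s = d + 1}"

definition subdivision :: "'a::euclidean_space set set \<Rightarrow> 'a set set \<Rightarrow> bool" where
  "subdivision K' K \<longleftrightarrow> simplicial_complex K' \<and> simplicial_complex K \<and>
     polyhedron K' = polyhedron K \<and>
     (\<forall>s'\<in>K'. \<exists>s\<in>K. convex hull s' \<subseteq> convex hull s)"

definition proper_subdivision :: "'a::euclidean_space set set \<Rightarrow> 'a set set \<Rightarrow> bool" where
  "proper_subdivision K' K \<longleftrightarrow> subdivision K' K \<and>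
     (\<forall>s'\<in>K'. \<not> (\<exists>s1\<in>K. \<exists>s2\<in>K. convex hull s1 \<inter> convex hull s2 = {} \<and>
                   convex hull s' \<inter> convex hull s1 \<noteq> {} \<and>
                   convex hull s' \<inter> convex hull s2 \<noteq> {}))"

definition simplicial_map :: "'a set set \<Rightarrow> 'a set set \<Rightarrow> ('a \<Rightarrow> 'a) \<Rightarrow> bool" where
  "simplicial_map K' K \<gamma> \<longleftrightarrow> (\<forall>s\<in>K'. \<gamma> ` s \<in> K)"

definition simplicial_dynamical_system ::
    "'a::euclidean_space set set \<Rightarrow> 'a set set \<Rightarrow> ('a \<Rightarrow> 'a) \<Rightarrow> bool" where
  "simplicial_dynamical_system K' K \<gamma> \<longleftrightarrow>
     proper_subdivision K' K \<and> simplicial_map K' K \<gamma>"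

definition non_degenerate :: "'a set set \<Rightarrow> ('a \<Rightarrow> 'a) \<Rightarrow> bool" where
  "non_degenerate K' \<gamma> \<longleftrightarrow> (\<forall>s\<in>K'. card (\<gamma> ` s) = card s)"

text \<open>Barycentric coordinate of x with respect to vertex v of the complex K
(0 if no simplex containing v contains x).\<close>
definition bary :: "'a::euclidean_space set set \<Rightarrow> 'a \<Rightarrow> 'a \<Rightarrow> real" where
  "bary K v x =
     (if \<exists>s\<in>K. v \<in> s \<and> x \<in> convex hull s then
        (SOME t. \<exists>s\<in>K. v \<in> s \<and> (\<exists>u. (\<forall>w\<in>s. 0 \<le> u w) \<and> sum u s = 1 \<and>
                     (\<Sum>w\<in>s. u w *\<^sub>R w) = x \<and> u v = t))
      else 0)"

definition pl_map :: "'a::euclidean_space set set \<Rightarrow> ('a \<Rightarrow> 'a) \<Rightarrow> 'a \<Rightarrow> 'a" where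
  "pl_map K' \<gamma> x = (\<Sum>v\<in>vertices K'. bary K' v x *\<^sub>R \<gamma> v)"

definition everywhere_dim :: "nat \<Rightarrow> 'a::euclidean_space set \<Rightarrow> bool" where
  "everywhere_dim d X \<longleftrightarrow> (\<exists>F. finite F \<and> (\<forall>T\<in>F. (int d) simplex T) \<and> X = \<Union>F)"

definition Grel :: "nat \<Rightarrow> 'a::euclidean_space set set \<Rightarrow> ('a \<Rightarrow> 'a) \<Rightarrow> ('a set \<times> 'a set) set" where
  "Grel d K' \<gamma> = {(s1, s2). s1 \<in> dsimplices d K' \<and> s2 \<in> dsimplices d K' \<and>
                    convex hull s2 \<subseteq> convex hull (\<gamma> ` s1)}"

definition shift_space :: "'b set \<Rightarrow> ('b \<times> 'b) set \<Rightarrow> (nat \<Rightarrow> 'b) set" where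
  "shift_space A G = {s. (\<forall>i. s i \<in> A) \<and> (\<forall>i. (s i, s (Suc i)) \<in> G)}"

definition shift_top :: "'b set \<Rightarrow> ('b \<times> 'b) set \<Rightarrow> (nat \<Rightarrow> 'b) topology" where
  "shift_top A G = subtopology (product_topology (\<lambda>_. discrete_topology A) UNIV) (shift_space A G)"

definition shift :: "(nat \<Rightarrow> 'b) \<Rightarrow> (nat \<Rightarrow> 'b)" where
  "shift s = (\<lambda>i. s (Suc i))"

definition almost_one_to_one :: "'b topology \<Rightarrow> ('b \<Rightarrow> 'c) \<Rightarrow> bool" where
  "almost_one_to_one T h \<longleftrightarrow>
     T closure_of {y\<in>topspace T. {z\<in>topspace T. h z = h y} = {y}} = topspace T"

end

theory Submission
  imports Defs
begin

text \<open>
  On each simplex t of K^* the map g is affine with an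
  affine inverse onto the simplex \<gamma>(t) of K, so the set of points following a finite admissible
  word is an affine image of a d-simplex.  Properness of the subdivision makes every simplex of K^*
  uniformly thinner than the simplex of K containing it, so pulling back along the word contracts
  differences by a fixed factor c < 1 per letter: these cylinders are nonempty, compact, nested and
  shrink to a point, which yields existence, uniqueness and continuity of the map, while
  equivariance with the shift is immediate.  It is onto because a d-simplex of K is covered by the
  d-simplices of K^* inside it.  It is almost one-to-one because, by Baire's theorem, every
  d-dimensional cylinder contains points whose orbit never meets a simplex of K^* of dimension
  less than d, and such a point lies in only one d-simplex at every time.
\<close>

section \<open>Barycentric coordinates\<close>

definition convex_coords :: "'a::real_vector set \<Rightarrow> 'a \<Rightarrow> ('a \<Rightarrow> real) \<Rightarrow> bool" where
  "convex_coords s x u \<longleftrightarrow> (\<forall>w\<in>s. 0 \<le> u w) \<and> sum u s = 1 \<and> (\<Sum>w\<in>s. u w *\<^sub>R w) = x"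

lemma convex_hull_iff_convex_coords:
  "finite s \<Longrightarrow> x \<in> convex hull s \<longleftrightarrow> (\<exists>u. convex_coords s x u)"
  by (simp add: convex_hull_finite convex_coords_def)

lemma convex_coords_unique:
  assumes "\<not> affine_dependent s" "finite s" "convex_coords s x u" "convex_coords s x u'" "w \<in> s"
  shows "u w = u' w"
proof (rule ccontr)
  assume ne: "u w \<noteq> u' w"
  have "sum (\<lambda>v. u v - u' v) s = 0" "(\<Sum>v\<in>s. (u v - u' v) *\<^sub>R v) = 0"
    using assms(3,4) by (auto simp: convex_coords_def sum_subtractf scaleR_diff_left)
  then have "affine_dependent s"
    using assms(2,5) ne by (subst affine_dependent_explicit_finite) (auto intro!: exI[of _ "\<lambda>v. u v - u' v"])
  with assms(1) show False by simp
qed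

lemma convex_sum_in_convex_hull:
  assumes "finite s" "\<forall>w\<in>s. 0 \<le> u w" "sum u s = 1" "\<forall>w\<in>s. y w \<in> convex hull A"
  shows "(\<Sum>w\<in>s. u w *\<^sub>R y w) \<in> convex hull A"
  using convex_sum[OF assms(1) convex_convex_hull] assms by blast

lemma simplicial_complexD:
  assumes "simplicial_complex K"
  shows "finite K"
    and "s \<in> K \<Longrightarrow> finite s" "s \<in> K \<Longrightarrow> s \<noteq> {}" "s \<in> K \<Longrightarrow> \<not> affine_dependent s"
    and "s \<in> K \<Longrightarrow> t \<subseteq> s \<Longrightarrow> t \<noteq> {} \<Longrightarrow> t \<in> K"
    and "s \<in> K \<Longrightarrow> t \<in> K \<Longrightarrow> convex hull s \<inter> convex hull t = convex hull (s \<inter> t)"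
  using assms unfolding simplicial_complex_def by blast+

lemma convex_coords_restrict_face:
  assumes K: "simplicial_complex K" and s: "s \<in> K" and s': "s' \<in> K"
    and x: "x \<in> convex hull s'" and u: "convex_coords s x u"
  shows "\<exists>\<rho>. convex_coords (s \<inter> s') x \<rho> \<and> (\<forall>w\<in>s. u w = (if w \<in> s' then \<rho> w else 0))"
proof -
  have fs: "finite s" "\<not> affine_dependent s" using simplicial_complexD[OF K] s by auto
  have "x \<in> convex hull s" using u fs convex_hull_iff_convex_coords by blast
  then have "x \<in> convex hull (s \<inter> s')" using simplicial_complexD(6)[OF K s s'] x by blast
  then obtain \<rho> where \<rho>: "convex_coords (s \<inter> s') x \<rho>"
    using convex_hull_iff_convex_coords fs by (meson finite_Int)
  define \<rho>' where "\<rho>' w = (if w \<in> s' then \<rho> w else 0)" for w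
  have "sum \<rho>' s = sum \<rho> (s \<inter> s')" "(\<Sum>w\<in>s. \<rho>' w *\<^sub>R w) = (\<Sum>w\<in>s \<inter> s'. \<rho> w *\<^sub>R w)"
    using fs by (simp_all add: \<rho>'_def sum.inter_restrict if_distrib[of "\<lambda>c. c *\<^sub>R _"] cong: if_cong)
  then have "convex_coords s x \<rho>'" using \<rho> unfolding convex_coords_def \<rho>'_def by auto
  then have "\<forall>w\<in>s. u w = \<rho>' w" using convex_coords_unique[OF fs(2,1) u] by blast
  then show ?thesis using \<rho> unfolding \<rho>'_def by blast
qed

lemma convex_coords_agree:
  assumes K: "simplicial_complex K" and s: "s \<in> K" and s': "s' \<in> K"
    and u: "convex_coords s x u" and u': "convex_coords s' x u'" and w: "w \<in> s"
  shows "u w = (if w \<in> s' then u' w else 0)"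
proof -
  have f: "finite s" "finite s'" using simplicial_complexD(2)[OF K] s s' by auto
  have x: "x \<in> convex hull s'" "x \<in> convex hull s"
    using u u' f convex_hull_iff_convex_coords by blast+
  obtain \<rho> where \<rho>: "convex_coords (s \<inter> s') x \<rho>" "\<forall>w\<in>s. u w = (if w \<in> s' then \<rho> w else 0)"
    using convex_coords_restrict_face[OF K s s' x(1) u] by blast
  obtain \<rho>' where \<rho>': "convex_coords (s' \<inter> s) x \<rho>'" "\<forall>w\<in>s'. u' w = (if w \<in> s then \<rho>' w else 0)"
    using convex_coords_restrict_face[OF K s' s x(2) u'] by blast
  have ind: "\<not> affine_dependent (s \<inter> s')"
    using simplicial_complexD(4)[OF K s] affine_dependent_subset by blast
  have "\<rho> w = \<rho>' w" if "w \<in> s'"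
    by (rule convex_coords_unique[OF ind _ \<rho>(1) \<rho>'(1)[unfolded Int_commute[of s' s]]])
      (use f w that in auto)
  then show ?thesis using \<rho> \<rho>' w by auto
qed

lemma bary_eq_convex_coords:
  assumes K: "simplicial_complex K" and s: "s \<in> K" and u: "convex_coords s x u"
  shows "bary K v x = (if v \<in> s then u v else 0)"
proof -
  define P where "P t \<longleftrightarrow> (\<exists>s'\<in>K. v \<in> s' \<and> (\<exists>u'. (\<forall>w\<in>s'. 0 \<le> u' w) \<and> sum u' s' = 1 \<and>
                     (\<Sum>w\<in>s'. u' w *\<^sub>R w) = x \<and> u' v = t))" for t
  have bary_P: "bary K v x = (if \<exists>s'\<in>K. v \<in> s' \<and> x \<in> convex hull s' then Eps P else 0)"
    unfolding bary_def P_def ..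
  have P_unique: "t = (if v \<in> s then u v else 0)" if Pt: "P t" for t
  proof -
    obtain s' u' where s': "s' \<in> K" "v \<in> s'" "convex_coords s' x u'" "u' v = t"
      using Pt unfolding P_def convex_coords_def by blast
    show ?thesis using convex_coords_agree[OF K s'(1) s s'(3) u s'(2)] s'(4) by simp
  qed
  show ?thesis
  proof (cases "\<exists>s'\<in>K. v \<in> s' \<and> x \<in> convex hull s'")
    case True
    then obtain s' u' where "s' \<in> K" "v \<in> s'" "convex_coords s' x u'"
      using convex_hull_iff_convex_coords simplicial_complexD(2)[OF K] by blast
    then have "P (u' v)" unfolding P_def convex_coords_def by blast
    then show ?thesis using bary_P True P_unique[OF someI[of P]] by simp
  next
    case False
    then have "v \<notin> s" using s u convex_hull_iff_convex_coords simplicial_complexD(2)[OF K] by blast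
    then show ?thesis using bary_P False by simp
  qed
qed

lemma pl_map_eq_convex_coords:
  assumes K: "simplicial_complex K" and s: "s \<in> K" and u: "convex_coords s x u"
  shows "pl_map K \<gamma> x = (\<Sum>w\<in>s. u w *\<^sub>R \<gamma> w)"
proof -
  have fin: "finite (vertices K)" and "s \<subseteq> vertices K"
    using simplicial_complexD(1,2)[OF K] s unfolding vertices_def by auto
  then have "vertices K \<inter> s = s" by blast
  have "pl_map K \<gamma> x = (\<Sum>v\<in>vertices K. if v \<in> s then u v *\<^sub>R \<gamma> v else 0)"
    unfolding pl_map_def by (rule sum.cong) (auto simp: bary_eq_convex_coords[OF K s u])
  also have "\<dots> = (\<Sum>v\<in>vertices K \<inter> s. u v *\<^sub>R \<gamma> v)"
    using fin by (simp add: sum.inter_restrict)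
  finally show ?thesis using \<open>vertices K \<inter> s = s\<close> by simp
qed

section \<open>Affine maps\<close>

definition affine_map :: "('a::real_vector \<Rightarrow> 'b::real_vector) \<Rightarrow> bool" where
  "affine_map f \<longleftrightarrow> (\<exists>c L. linear L \<and> f = (\<lambda>x. c + L x))"

lemma affine_map_id: "affine_map (\<lambda>x. x)"
  unfolding affine_map_def by (intro exI[of _ 0] exI[of _ id]) (auto simp: linear_id)

lemma affine_map_comp: "affine_map f \<Longrightarrow> affine_map k \<Longrightarrow> affine_map (k \<circ> f)"
proof -
  assume "affine_map f" "affine_map k"
  then obtain c1 L1 c2 L2 where
    L: "linear L1" "f = (\<lambda>x. c1 + L1 x)" "linear L2" "k = (\<lambda>x. c2 + L2 x)"
    unfolding affine_map_def by blast
  then have "k \<circ> f = (\<lambda>x. (c2 + L2 c1) + (L2 \<circ> L1) x)" by (auto simp: linear_add)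
  with L show ?thesis unfolding affine_map_def using linear_compose by blast
qed

lemma affine_map_sum:
  assumes "affine_map f" "sum u s = 1"
  shows "f (\<Sum>w\<in>s. u w *\<^sub>R y w) = (\<Sum>w\<in>s. u w *\<^sub>R f (y w))"
proof -
  obtain c L where L: "linear L" "f = (\<lambda>x. c + L x)" using assms(1) affine_map_def by blast
  have "f (\<Sum>w\<in>s. u w *\<^sub>R y w) = (\<Sum>w\<in>s. u w) *\<^sub>R c + (\<Sum>w\<in>s. u w *\<^sub>R L (y w))"
    using L assms(2) by (simp add: linear_sum linear_scale)
  also have "\<dots> = (\<Sum>w\<in>s. u w *\<^sub>R (c + L (y w)))"
    by (simp add: scaleR_add_right sum.distrib scaleR_sum_left)
  finally show ?thesis using L by simp
qed

lemma affine_map_diff: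
  assumes "affine_map f" obtains L where "linear L" "\<And>x y. f x - f y = L (x - y)"
  using assms unfolding affine_map_def by (metis add_diff_cancel_left linear_diff)

lemma continuous_on_affine_map:
  fixes f :: "'a::euclidean_space \<Rightarrow> 'b::real_normed_vector"
  assumes "affine_map f" shows "continuous_on S f"
proof -
  obtain c L where L: "linear L" "f = (\<lambda>x. c + L x)" using assms affine_map_def by blast
  then have "continuous_on S L" by (simp add: linear_continuous_on linear_conv_bounded_linear)
  then show ?thesis using L by (auto intro!: continuous_intros)
qed

lemma affine_map_image_eq:
  assumes "affine_map f" obtains c L where "linear L" "\<And>S. f ` S = (+) c ` (L ` S)"
  using assms unfolding affine_map_def by (auto simp: image_image)

lemma aff_dim_affine_map_image_le:
  fixes f :: "'a::euclidean_space \<Rightarrow> 'b::euclidean_space"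
  assumes "affine_map f" shows "aff_dim (f ` S) \<le> aff_dim S"
  using assms
  by (rule affine_map_image_eq) (simp add: aff_dim_translation_eq aff_dim_linear_image_le)

lemma convex_affine_map_image: "affine_map f \<Longrightarrow> convex S \<Longrightarrow> convex (f ` S)"
  by (metis affine_map_image_eq convex_linear_image convex_translation)

lemma affine_map_extend:
  fixes \<phi> :: "'a::real_vector \<Rightarrow> 'b::real_vector"
  assumes "\<not> affine_dependent s"
  obtains f where "affine_map f" "\<And>w. w \<in> s \<Longrightarrow> f w = \<phi> w"
proof (cases "s = {}")
  case True
  have "affine_map (\<lambda>x. 0)"
    unfolding affine_map_def by (intro exI[of _ 0] exI[of _ "\<lambda>x. 0"]) (simp add: linear_zero)
  then show ?thesis using that True by blast
next
  case False
  then obtain a where a: "a \<in> s" by blast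
  have "insert a (s - {a}) = s" using a by blast
  then have "\<not> dependent ((+) (- a) ` (s - {a}))"
    using assms affine_dependent_iff_dependent[of a "s - {a}"] by simp
  then obtain L where L: "linear L" "\<And>b. b \<in> (+) (- a) ` (s - {a}) \<Longrightarrow> L b = \<phi> (a + b) - \<phi> a"
    using linear_independent_extend[of "(+) (- a) ` (s - {a})" "\<lambda>b. \<phi> (a + b) - \<phi> a"] by blast
  define f where "f x = (\<phi> a - L a) + L x" for x
  have "affine_map f" unfolding affine_map_def f_def using L(1) by blast
  moreover have "f w = \<phi> w" if "w \<in> s" for w
  proof (cases "w = a")
    case False
    then have "L (- a + w) = \<phi> w - \<phi> a" using L(2)[of "- a + w"] that by auto
    moreover have "L w = L (- a + w) + L a" using L(1) by (simp add: linear_add[symmetric])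
    ultimately show ?thesis by (simp add: f_def)
  qed (simp add: f_def)
  ultimately show ?thesis using that by blast
qed

section \<open>Simplices inside simplices\<close>

definition scaled_diff :: "real \<Rightarrow> 'a::real_vector set \<Rightarrow> 'a \<Rightarrow> bool" where
  "scaled_diff c B z \<longleftrightarrow> (\<exists>p\<in>B. \<exists>q\<in>B. z = c *\<^sub>R (q - p))"

definition contracting_into :: "real \<Rightarrow> 'a::real_vector set \<Rightarrow> 'a set \<Rightarrow> bool" where
  "contracting_into c A B \<longleftrightarrow> (\<forall>p\<in>A. \<forall>q\<in>A. scaled_diff c B (q - p))"

lemma convex_scaled_diff: "convex B \<Longrightarrow> convex (Collect (scaled_diff c B))"
proof -
  assume "convex B"
  then have "convex ((\<lambda>x. c *\<^sub>R x) ` (\<Union>q\<in>B. \<Union>p\<in>B. {q - p}))"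
    by (intro convex_scaling convex_differences)
  moreover have "Collect (scaled_diff c B) = (\<lambda>x. c *\<^sub>R x) ` (\<Union>q\<in>B. \<Union>p\<in>B. {q - p})"
    unfolding scaled_diff_def by blast
  ultimately show ?thesis by simp
qed

text \<open>r (q - p) = c (q' - p) for the point q' dividing the segment [p, q] in the ratio r / c.\<close>
lemma scaled_diff_mono:
  assumes "convex B" "scaled_diff r B z" "0 \<le> r" "r \<le> c"
  shows "scaled_diff c B z"
proof -
  obtain p q where pq: "p \<in> B" "q \<in> B" "z = r *\<^sub>R (q - p)" using assms(2) scaled_diff_def by blast
  show ?thesis
  proof (cases "c = 0")
    case True
    then show ?thesis using assms(3,4) pq unfolding scaled_diff_def by auto
  next
    case False
    define l where "l = r / c"
    have l: "0 \<le> l" "l \<le> 1" using assms(3,4) False by (auto simp: l_def divide_simps)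
    define q' where "q' = (1 - l) *\<^sub>R p + l *\<^sub>R q"
    have "q' \<in> B" using convexD[OF assms(1) pq(1,2)] l unfolding q'_def by simp
    moreover have "z = c *\<^sub>R (q' - p)"
      using False pq(3) unfolding q'_def l_def by (simp add: algebra_simps)
    ultimately show ?thesis using pq(1) unfolding scaled_diff_def by blast
  qed
qed

lemma contracting_into_mono:
  "convex B \<Longrightarrow> contracting_into r A B \<Longrightarrow> 0 \<le> r \<Longrightarrow> r \<le> c \<Longrightarrow> contracting_into c A B"
  unfolding contracting_into_def using scaled_diff_mono by blast

lemma convex_coords_support:
  assumes "finite S" "convex_coords S x \<beta>"
  shows "x \<in> convex hull {v\<in>S. 0 < \<beta> v}" "{v\<in>S. 0 < \<beta> v} \<noteq> {}"
proof -
  have \<beta>: "\<forall>v\<in>S. 0 \<le> \<beta> v" "sum \<beta> S = 1" "(\<Sum>v\<in>S. \<beta> v *\<^sub>R v) = x"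
    using assms(2) convex_coords_def by auto
  have sums: "sum \<beta> {v\<in>S. 0 < \<beta> v} = sum \<beta> S"
    "(\<Sum>v\<in>{v\<in>S. 0 < \<beta> v}. \<beta> v *\<^sub>R v) = (\<Sum>v\<in>S. \<beta> v *\<^sub>R v)"
    using assms(1) \<beta>(1) by (intro sum.mono_neutral_left; force)+
  then have "convex_coords {v\<in>S. 0 < \<beta> v} x \<beta>" using \<beta> unfolding convex_coords_def by auto
  then show "x \<in> convex hull {v\<in>S. 0 < \<beta> v}"
    by (subst convex_hull_iff_convex_coords) (use assms(1) in auto)
  show "{v\<in>S. 0 < \<beta> v} \<noteq> {}" using sums(1) \<beta>(2) by (metis sum.empty zero_neq_one)
qed

lemma renormalised_remainder_in_convex_hull:
  assumes "finite S" "convex_coords S p a" "\<forall>v\<in>S. 0 \<le> m v \<and> m v \<le> a v" "sum m S < 1"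
  shows "(\<Sum>v\<in>S. ((a v - m v) / (1 - sum m S)) *\<^sub>R v) \<in> convex hull S"
proof (rule convex_sum_in_convex_hull)
  have "(\<Sum>v\<in>S. (a v - m v) / (1 - sum m S)) = (sum a S - sum m S) / (1 - sum m S)"
    by (simp add: sum_divide_distrib[symmetric] sum_subtractf)
  then show "(\<Sum>v\<in>S. (a v - m v) / (1 - sum m S)) = 1"
    using assms(2,4) unfolding convex_coords_def by simp
qed (use assms in \<open>auto simp: hull_inc\<close>)

text \<open>Remove the common part of the two coordinate vectors and renormalise what is left.\<close>
lemma scaled_diff_convex_coords_overlap:
  assumes fS: "finite S" and a: "convex_coords S p a" and b: "convex_coords S q b"
  shows "scaled_diff (1 - (\<Sum>v\<in>S. min (a v) (b v))) (convex hull S) (q - p)"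
proof -
  define m where "m v = min (a v) (b v)" for v
  define k where "k = sum m S"
  have a0: "\<forall>v\<in>S. 0 \<le> a v" "sum a S = 1" "(\<Sum>v\<in>S. a v *\<^sub>R v) = p"
   and b0: "\<forall>v\<in>S. 0 \<le> b v" "sum b S = 1" "(\<Sum>v\<in>S. b v *\<^sub>R v) = q"
    using a b convex_coords_def by auto
  have m: "\<forall>v\<in>S. 0 \<le> m v \<and> m v \<le> a v" "\<forall>v\<in>S. 0 \<le> m v \<and> m v \<le> b v"
    using a0 b0 by (auto simp: m_def)
  have "k \<le> sum a S" unfolding k_def using m by (intro sum_mono) auto
  then consider "k < 1" | "k = 1" using a0 by linarith
  then show ?thesis
  proof cases
    case 1
    let ?p' = "\<Sum>v\<in>S. ((a v - m v) / (1 - k)) *\<^sub>R v" and ?q' = "\<Sum>v\<in>S. ((b v - m v) / (1 - k)) *\<^sub>R v"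
    have "?p' \<in> convex hull S" "?q' \<in> convex hull S"
      using renormalised_remainder_in_convex_hull[OF fS a m(1)] renormalised_remainder_in_convex_hull[OF fS b m(2)] 1
      unfolding k_def by auto
    moreover have "(1 - k) *\<^sub>R (?q' - ?p') = (\<Sum>v\<in>S. (b v - a v) *\<^sub>R v)"
      using 1 by (simp add: scaleR_diff_right scaleR_sum_right sum_subtractf[symmetric]
          scaleR_diff_left[symmetric] diff_divide_distrib[symmetric])
    then have "q - p = (1 - k) *\<^sub>R (?q' - ?p')"
      using a0(3) b0(3) by (simp add: scaleR_diff_left sum_subtractf)
    ultimately show ?thesis unfolding scaled_diff_def k_def m_def by blast
  next
    case 2
    have "sum (\<lambda>v. a v - m v) S = 0" "sum (\<lambda>v. b v - m v) S = 0"
      using 2 a0 b0 by (simp_all add: sum_subtractf k_def)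
    then have "\<forall>v\<in>S. a v - m v = 0 \<and> b v - m v = 0"
      using sum_nonneg_eq_0_iff[OF fS, of "\<lambda>v. a v - m v"] sum_nonneg_eq_0_iff[OF fS, of "\<lambda>v. b v - m v"] m
      by auto
    then have "(\<Sum>v\<in>S. a v *\<^sub>R v) = (\<Sum>v\<in>S. b v *\<^sub>R v)" by (intro sum.cong) auto
    then have "p = q" using a0(3) b0(3) by simp
    moreover have "p \<in> convex hull S" using a fS convex_hull_iff_convex_coords by blast
    ultimately show ?thesis unfolding scaled_diff_def by (intro bexI[of _ p]) auto
  qed
qed

lemma convex_coords_overlap_pos:
  assumes fS: "finite S" and \<beta>: "convex_coords S w \<beta>" and \<beta>': "convex_coords S w' \<beta>'"
    and w: "w \<in> A" "w' \<in> A"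
    and disj: "\<And>F1 F2. F1 \<subseteq> S \<Longrightarrow> F2 \<subseteq> S \<Longrightarrow> F1 \<noteq> {} \<Longrightarrow> F2 \<noteq> {} \<Longrightarrow> F1 \<inter> F2 = {} \<Longrightarrow>
        A \<inter> convex hull F1 = {} \<or> A \<inter> convex hull F2 = {}"
  shows "0 < (\<Sum>v\<in>S. min (\<beta> v) (\<beta>' v))"
proof (rule ccontr)
  assume "\<not> ?thesis"
  moreover have nonneg: "\<forall>v\<in>S. 0 \<le> min (\<beta> v) (\<beta>' v)"
    using \<beta> \<beta>' unfolding convex_coords_def by auto
  ultimately have "(\<Sum>v\<in>S. min (\<beta> v) (\<beta>' v)) = 0" by (simp add: sum_nonneg order.antisym)
  then have "\<forall>v\<in>S. min (\<beta> v) (\<beta>' v) = 0"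
    using sum_nonneg_eq_0_iff[OF fS, of "\<lambda>v. min (\<beta> v) (\<beta>' v)"] nonneg by simp
  then have "{v\<in>S. 0 < \<beta> v} \<inter> {v\<in>S. 0 < \<beta>' v} = {}" by fastforce
  then have "A \<inter> convex hull {v\<in>S. 0 < \<beta> v} = {} \<or> A \<inter> convex hull {v\<in>S. 0 < \<beta>' v} = {}"
    using convex_coords_support(2)[OF fS \<beta>] convex_coords_support(2)[OF fS \<beta>'] by (intro disj) auto
  then show False using convex_coords_support(1)[OF fS \<beta>] convex_coords_support(1)[OF fS \<beta>'] w by blast
qed

lemma diff_convex_hull_in_convex:
  assumes t: "finite t" and C: "convex C" and vertex_diff: "\<And>w w'. w \<in> t \<Longrightarrow> w' \<in> t \<Longrightarrow> w' - w \<in> C"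
    and p: "p \<in> convex hull t" and q: "q \<in> convex hull t"
  shows "q - p \<in> C"
proof -
  obtain \<alpha> \<alpha>' where "convex_coords t p \<alpha>" "convex_coords t q \<alpha>'"
    using p q convex_hull_iff_convex_coords[OF t] by blast
  then have A: "\<forall>w\<in>t. 0 \<le> \<alpha> w" "sum \<alpha> t = 1" "(\<Sum>w\<in>t. \<alpha> w *\<^sub>R w) = p"
    and A': "\<forall>w\<in>t. 0 \<le> \<alpha>' w" "sum \<alpha>' t = 1" "(\<Sum>w\<in>t. \<alpha>' w *\<^sub>R w) = q"
    unfolding convex_coords_def by auto
  have "(\<Sum>w\<in>t. \<Sum>w'\<in>t. (\<alpha> w * \<alpha>' w') *\<^sub>R w') = (\<Sum>w\<in>t. \<alpha> w *\<^sub>R (\<Sum>w'\<in>t. \<alpha>' w' *\<^sub>R w'))"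
    by (simp add: scaleR_sum_right)
  also have "\<dots> = q" using A(2) A'(3) by (simp add: scaleR_sum_left[symmetric])
  finally have q: "(\<Sum>w\<in>t. \<Sum>w'\<in>t. (\<alpha> w * \<alpha>' w') *\<^sub>R w') = q" .
  have "(\<Sum>w\<in>t. \<Sum>w'\<in>t. (\<alpha> w * \<alpha>' w') *\<^sub>R w) = (\<Sum>w\<in>t. (\<alpha> w * (\<Sum>w'\<in>t. \<alpha>' w')) *\<^sub>R w)"
    by (simp add: scaleR_sum_left[symmetric] sum_distrib_left)
  also have "\<dots> = p" using A(3) A'(2) by simp
  finally have p: "(\<Sum>w\<in>t. \<Sum>w'\<in>t. (\<alpha> w * \<alpha>' w') *\<^sub>R w) = p" .
  let ?a = "\<lambda>(w, w'). \<alpha> w * \<alpha>' w'" and ?y = "\<lambda>(w, w'). w' - w"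
  have "(\<Sum>i\<in>t \<times> t. ?a i *\<^sub>R ?y i)
      = (\<Sum>w\<in>t. \<Sum>w'\<in>t. (\<alpha> w * \<alpha>' w') *\<^sub>R w') - (\<Sum>w\<in>t. \<Sum>w'\<in>t. (\<alpha> w * \<alpha>' w') *\<^sub>R w)"
    by (simp add: sum.cartesian_product' scaleR_diff_right sum_subtractf)
  also have "\<dots> = q - p" using p q by simp
  finally have "q - p = (\<Sum>i\<in>t \<times> t. ?a i *\<^sub>R ?y i)" ..
  also have "\<dots> \<in> C"
  proof (rule convex_sum[OF _ C])
    show "finite (t \<times> t)" using t by simp
    show "(\<Sum>i\<in>t \<times> t. ?a i) = 1"
      using A(2) A'(2) by (simp add: sum.cartesian_product' sum_distrib_left[symmetric])
    show "0 \<le> ?a i" "?y i \<in> C" if "i \<in> t \<times> t" for i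
      using that A(1) A'(1) vertex_diff by auto
  qed
  finally show ?thesis .
qed

text \<open>Properness enters here: the coordinates in S of any two vertices of t overlap, hence
  by at least some k > 0, and differences of points of t are convex combinations of vertex
  differences.\<close>
lemma convex_hull_contracting_into:
  fixes t S :: "'a::real_vector set"
  assumes ft: "finite t" "t \<noteq> {}" and fS: "finite S" and sub: "t \<subseteq> convex hull S"
    and disj: "\<And>F1 F2. F1 \<subseteq> S \<Longrightarrow> F2 \<subseteq> S \<Longrightarrow> F1 \<noteq> {} \<Longrightarrow> F2 \<noteq> {} \<Longrightarrow> F1 \<inter> F2 = {} \<Longrightarrow>
        convex hull t \<inter> convex hull F1 = {} \<or> convex hull t \<inter> convex hull F2 = {}"
  obtains c where "0 \<le> c" "c < 1" "contracting_into c (convex hull t) (convex hull S)"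
proof -
  have "\<forall>w\<in>t. \<exists>b. convex_coords S w b" using sub convex_hull_iff_convex_coords[OF fS] by blast
  then obtain \<beta> where \<beta>: "\<And>w. w \<in> t \<Longrightarrow> convex_coords S w (\<beta> w)" by metis
  define \<kappa> where "\<kappa> w w' = (\<Sum>v\<in>S. min (\<beta> w v) (\<beta> w' v))" for w w'
  have \<kappa>_pos: "0 < \<kappa> w w'" if "w \<in> t" "w' \<in> t" for w w'
    unfolding \<kappa>_def
    by (rule convex_coords_overlap_pos[OF fS \<beta>[OF that(1)] \<beta>[OF that(2)]
          hull_inc[OF that(1)] hull_inc[OF that(2)] disj])
  define k where "k = Min (case_prod \<kappa> ` (t \<times> t))"
  have fin: "finite (case_prod \<kappa> ` (t \<times> t))" "case_prod \<kappa> ` (t \<times> t) \<noteq> {}" using ft by auto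
  have k_pos: "0 < k" unfolding k_def using fin \<kappa>_pos by (subst Min_gr_iff) auto
  have k_le: "k \<le> \<kappa> w w'" if "w \<in> t" "w' \<in> t" for w w'
    unfolding k_def using fin that by (intro Min_le) auto
  have \<kappa>_le: "\<kappa> w w' \<le> 1" if "w \<in> t" for w w'
  proof -
    have "\<kappa> w w' \<le> sum (\<beta> w) S" unfolding \<kappa>_def by (intro sum_mono) simp
    then show ?thesis using \<beta>[OF that] unfolding convex_coords_def by simp
  qed
  let ?C = "Collect (scaled_diff (1 - k) (convex hull S))"
  have "w' - w \<in> ?C" if "w \<in> t" "w' \<in> t" for w w'
    using scaled_diff_convex_coords_overlap[OF fS \<beta>[OF that(1)] \<beta>[OF that(2)]]
      k_le[OF that] \<kappa>_le[OF that(1)]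
    by (auto simp: \<kappa>_def intro: scaled_diff_mono[OF convex_convex_hull])
  then have "q - p \<in> ?C" if "p \<in> convex hull t" "q \<in> convex hull t" for p q
    using diff_convex_hull_in_convex[OF ft(1) convex_scaled_diff[OF convex_convex_hull]] that by blast
  moreover obtain w where "w \<in> t" using ft(2) by blast
  ultimately show ?thesis
    using that[of "1 - k"] k_pos k_le[of w w] \<kappa>_le[of w w] unfolding contracting_into_def by simp
qed

section \<open>The shift space\<close>

lemma topspace_shift_top: "topspace (shift_top A G) = shift_space A G"
  unfolding shift_top_def
  by (auto simp: topspace_subtopology topspace_product_topology shift_space_def PiE_iff)

lemma openin_shift_top_cylinder:
  "openin (shift_top A G) {s' \<in> shift_space A G. \<forall>i\<le>n. s' i = s i}"
proof -
  let ?P = "product_topology (\<lambda>_. discrete_topology A) (UNIV :: nat set)"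
  have coord: "openin ?P {f \<in> topspace ?P. f i \<in> {s i} \<inter> A}" for i
    by (rule openin_continuous_map_preimage[OF continuous_map_product_projection]) auto
  have "openin ?P (\<Inter>i\<in>{..n}. {f \<in> topspace ?P. f i \<in> {s i} \<inter> A})"
    using coord by (intro openin_Inter) auto
  moreover have "{s' \<in> shift_space A G. \<forall>i\<le>n. s' i = s i}
      = (\<Inter>i\<in>{..n}. {f \<in> topspace ?P. f i \<in> {s i} \<inter> A}) \<inter> shift_space A G"
    by (auto simp: topspace_product_topology shift_space_def PiE_iff)
  ultimately show ?thesis unfolding shift_top_def openin_subtopology by blast
qed

lemma openin_shift_top_imp_cylinder:
  assumes T: "openin (shift_top A G) T" and s: "s \<in> T"
  obtains n where "{s' \<in> shift_space A G. \<forall>i\<le>n. s' i = s i} \<subseteq> T"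
proof -
  obtain V where V: "openin (product_topology (\<lambda>_. discrete_topology A) UNIV) V"
    "T = V \<inter> shift_space A G"
    using T unfolding shift_top_def openin_subtopology by blast
  then obtain U where U: "finite {i. U i \<noteq> A}" "s \<in> Pi\<^sub>E UNIV U" "Pi\<^sub>E UNIV U \<subseteq> V"
    using s unfolding openin_product_topology_alt by auto
  obtain n where n: "\<And>i. U i \<noteq> A \<Longrightarrow> i \<le> n"
    using U(1) finite_nat_set_iff_bounded_le by auto
  have "s' \<in> T" if s': "s' \<in> shift_space A G" "\<forall>i\<le>n. s' i = s i" for s'
  proof -
    have "s' i \<in> U i" for i
      using s' U(2) n[of i] unfolding shift_space_def by (cases "U i = A") (auto simp: PiE_iff)
    then show ?thesis using U(3) V(2) s'(1) by (auto simp: PiE_iff)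
  qed
  then show ?thesis using that by blast
qed

lemma continuous_map_shift_top_metric:
  fixes h :: "(nat \<Rightarrow> 'b) \<Rightarrow> 'c::metric_space" and \<delta> :: "nat \<Rightarrow> real"
  assumes \<delta>: "\<delta> \<longlonglongrightarrow> 0"
    and close: "\<And>s s' n. s \<in> shift_space A G \<Longrightarrow> s' \<in> shift_space A G \<Longrightarrow> \<forall>i\<le>n. s' i = s i \<Longrightarrow>
        dist (h s') (h s) \<le> \<delta> n"
  shows "continuous_map (shift_top A G) euclidean h"
  unfolding continuous_map_def topspace_shift_top
proof (intro conjI allI impI)
  fix U :: "'c set" assume "openin euclidean U"
  then have U: "open U" by simp
  show "openin (shift_top A G) {s \<in> shift_space A G. h s \<in> U}"
  proof (subst openin_subopen, intro ballI)
    fix s assume s: "s \<in> {s \<in> shift_space A G. h s \<in> U}"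
    obtain e where e: "e > 0" "ball (h s) e \<subseteq> U" using U s open_contains_ball by blast
    obtain n where "\<forall>m\<ge>n. norm (\<delta> m - 0) < e" using LIMSEQ_D[OF \<delta> e(1)] by blast
    then have n: "\<delta> n < e" by auto
    let ?C = "{s' \<in> shift_space A G. \<forall>i\<le>n. s' i = s i}"
    have "?C \<subseteq> {s \<in> shift_space A G. h s \<in> U}"
    proof safe
      fix s' assume s': "s' \<in> shift_space A G" "\<forall>i\<le>n. s' i = s i"
      then have "dist (h s) (h s') < e" using close[of s s' n] s n by (simp add: dist_commute)
      then show "h s' \<in> U" using e(2) by auto
    qed
    then show "\<exists>T. openin (shift_top A G) T \<and> s \<in> T \<and> T \<subseteq> {s \<in> shift_space A G. h s \<in> U}"
      using openin_shift_top_cylinder[of A G n s] s by blast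
  qed
qed auto

section \<open>Full-dimensional simplices\<close>

lemma aff_dim_convex_hull_independent:
  "\<not> affine_dependent s \<Longrightarrow> aff_dim (convex hull s) = int (card s) - 1"
  using aff_dim_affine_independent[of s] by (simp add: aff_dim_convex_hull)

lemma convex_cover_fulldim_cell:
  assumes "finite \<C>" "\<And>C. C \<in> \<C> \<Longrightarrow> closed C" "\<And>C. C \<in> \<C> \<Longrightarrow> convex C"
    and "\<Union>\<C> = U" "convex U" "y \<in> U"
  obtains C where "C \<in> \<C>" "y \<in> C" "aff_dim C = aff_dim U"
  using convex_Union_fulldim_cells[OF assms(1-5)] assms(6) by blast

lemma simplicial_complex_closed_simplex:
  "simplicial_complex K \<Longrightarrow> s \<in> K \<Longrightarrow> closed (convex hull s)"
  using simplicial_complexD(2) finite_imp_compact_convex_hull compact_imp_closed by blast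

lemma card_simplex_le_everywhere_dim:
  assumes K: "simplicial_complex K" and edim: "everywhere_dim d (polyhedron K)" and S: "S \<in> K"
  shows "card S \<le> d + 1"
proof (rule ccontr)
  assume big: "\<not> card S \<le> d + 1"
  obtain F where F: "finite F" "\<And>T. T \<in> F \<Longrightarrow> (int d) simplex T" "polyhedron K = \<Union>F"
    using edim unfolding everywhere_dim_def by blast
  let ?U = "convex hull S"
  obtain y where "y \<in> ?U" using simplicial_complexD(3)[OF K S] hull_subset by fastforce
  then obtain C where C: "C \<in> (\<lambda>T. ?U \<inter> T) ` F" "aff_dim C = aff_dim ?U"
  proof (rule convex_cover_fulldim_cell[rotated 5])
    show "\<Union> ((\<lambda>T. ?U \<inter> T) ` F) = ?U" using F(3) S unfolding polyhedron_def by blast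
  qed (use F simplicial_complex_closed_simplex[OF K S] in
        \<open>auto intro: closed_simplex convex_simplex closed_Int convex_Int\<close>)
  from C(1) obtain T where T: "T \<in> F" "C = ?U \<inter> T" by blast
  then have "aff_dim ?U \<le> int d"
    using C(2) aff_dim_subset[of C T] aff_dim_simplex[OF F(2)[OF T(1)]] by auto
  then show False
    using big aff_dim_convex_hull_independent[OF simplicial_complexD(4)[OF K S]] by simp
qed

lemma fulldim_simplex_cover:
  assumes L: "simplicial_complex L" and dim: "\<And>t. t \<in> L \<Longrightarrow> card t \<le> d + 1"
    and C: "closed C" "convex C" "C \<subseteq> polyhedron L" "aff_dim C = int d" and y: "y \<in> C"
  obtains t where "t \<in> L" "card t = d + 1" "y \<in> convex hull t" "aff_dim (convex hull t \<inter> C) = int d"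
proof -
  obtain C' where "C' \<in> (\<lambda>t. convex hull t \<inter> C) ` L" "y \<in> C'" "aff_dim C' = int d"
  proof (rule convex_cover_fulldim_cell[OF _ _ _ _ C(2) y])
    show "\<Union> ((\<lambda>t. convex hull t \<inter> C) ` L) = C" using C(3) unfolding polyhedron_def by blast
  qed (use simplicial_complexD(1)[OF L] simplicial_complex_closed_simplex[OF L] C in
        \<open>auto simp: C(4) intro: closed_Int convex_Int\<close>)
  then obtain t where t: "t \<in> L" "y \<in> convex hull t" "aff_dim (convex hull t \<inter> C) = int d" by blast
  have "int d \<le> aff_dim (convex hull t)" using t(3) aff_dim_subset[of "convex hull t \<inter> C"] by auto
  then have "d + 1 \<le> card t"
    using aff_dim_convex_hull_independent[OF simplicial_complexD(4)[OF L t(1)]] by simp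
  then show ?thesis using that t dim[OF t(1)] by simp
qed

section \<open>Cylinders of a non-degenerate simplicial dynamical system\<close>

locale nondegenerate_sds =
  fixes K Ks :: "'a::euclidean_space set set" and \<gamma> :: "'a \<Rightarrow> 'a" and d :: nat
  assumes sds: "simplicial_dynamical_system Ks K \<gamma>"
    and nd: "non_degenerate Ks \<gamma>"
    and d1: "d \<ge> 1"
    and edim: "everywhere_dim d (polyhedron K)"
begin

abbreviation "X \<equiv> polyhedron K"
abbreviation "g \<equiv> pl_map Ks \<gamma>"
abbreviation "D \<equiv> dsimplices d Ks"
abbreviation "Sig \<equiv> shift_space D (Grel d Ks \<gamma>)"

lemma K_complex: "simplicial_complex K"
  and Ks_complex: "simplicial_complex Ks"
  and polyhedron_Ks: "polyhedron Ks = X"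
  and Ks_refines: "t \<in> Ks \<Longrightarrow> \<exists>S\<in>K. convex hull t \<subseteq> convex hull S"
  and Ks_proper: "t \<in> Ks \<Longrightarrow> S1 \<in> K \<Longrightarrow> S2 \<in> K \<Longrightarrow> convex hull S1 \<inter> convex hull S2 = {} \<Longrightarrow>
      convex hull t \<inter> convex hull S1 = {} \<or> convex hull t \<inter> convex hull S2 = {}"
  and image_simplex: "t \<in> Ks \<Longrightarrow> \<gamma> ` t \<in> K"
  using sds unfolding simplicial_dynamical_system_def proper_subdivision_def subdivision_def
    simplicial_map_def by blast+

lemma inj_on_simplex: "t \<in> Ks \<Longrightarrow> inj_on \<gamma> t"
  using nd simplicial_complexD(2)[OF Ks_complex] unfolding non_degenerate_def
  by (simp add: eq_card_imp_inj_on)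

lemma X_eq_Union: "X = (\<Union>t\<in>Ks. convex hull t)"
  using polyhedron_Ks unfolding polyhedron_def by simp

lemma compact_X: "compact X"
  unfolding X_eq_Union using simplicial_complexD(1,2)[OF Ks_complex]
  by (intro compact_UN finite_imp_compact_convex_hull) auto

lemma card_Ks_le: assumes t: "t \<in> Ks" shows "card t \<le> d + 1"
proof -
  obtain S where S: "S \<in> K" "convex hull t \<subseteq> convex hull S" using Ks_refines[OF t] by blast
  have "int (card t) - 1 \<le> int (card S) - 1"
    using aff_dim_subset[OF S(2)]
    unfolding aff_dim_convex_hull_independent[OF simplicial_complexD(4)[OF Ks_complex t]]
      aff_dim_convex_hull_independent[OF simplicial_complexD(4)[OF K_complex S(1)]] .
  then show ?thesis using card_simplex_le_everywhere_dim[OF K_complex edim S(1)] by simp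
qed

lemma D_iff: "t \<in> D \<longleftrightarrow> t \<in> Ks \<and> card t = d + 1"
  unfolding dsimplices_def by simp

lemma g_convex_coords: "t \<in> Ks \<Longrightarrow> convex_coords t x u \<Longrightarrow> g x = (\<Sum>w\<in>t. u w *\<^sub>R \<gamma> w)"
  by (rule pl_map_eq_convex_coords[OF Ks_complex])

lemma g_convex_hull:
  assumes t: "t \<in> Ks" and x: "x \<in> convex hull t" shows "g x \<in> convex hull (\<gamma> ` t)"
proof -
  obtain u where u: "convex_coords t x u"
    using x convex_hull_iff_convex_coords simplicial_complexD(2)[OF Ks_complex t] by blast
  then show ?thesis
    unfolding g_convex_coords[OF t u] using simplicial_complexD(2)[OF Ks_complex t]
    by (intro convex_sum_in_convex_hull) (auto simp: convex_coords_def hull_inc)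
qed

lemma g_in_X: assumes "x \<in> X" shows "g x \<in> X"
proof -
  obtain t where t: "t \<in> Ks" "x \<in> convex hull t" using assms X_eq_Union by blast
  then have "g x \<in> convex hull (\<gamma> ` t)" "\<gamma> ` t \<in> K" using g_convex_hull image_simplex by auto
  then show ?thesis unfolding polyhedron_def by blast
qed

lemma funpow_g_in_X: "x \<in> X \<Longrightarrow> (g ^^ n) x \<in> X"
  by (induction n) (auto intro: g_in_X)

definition g_on :: "'a set \<Rightarrow> 'a \<Rightarrow> 'a" where
  "g_on t = (SOME f. affine_map f \<and> (\<forall>w\<in>t. f w = \<gamma> w))"

definition g_inv :: "'a set \<Rightarrow> 'a \<Rightarrow> 'a" where
  "g_inv t = (SOME f. affine_map f \<and> (\<forall>w\<in>t. f (\<gamma> w) = w))"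

lemma g_on: assumes "t \<in> Ks" shows "affine_map (g_on t)" "\<And>w. w \<in> t \<Longrightarrow> g_on t w = \<gamma> w"
proof -
  obtain f where "affine_map f" "\<And>w. w \<in> t \<Longrightarrow> f w = \<gamma> w"
    by (rule affine_map_extend[where \<phi> = \<gamma>, OF simplicial_complexD(4)[OF Ks_complex assms]]) blast
  then have "affine_map f \<and> (\<forall>w\<in>t. f w = \<gamma> w)" by blast
  then have "affine_map (g_on t) \<and> (\<forall>w\<in>t. g_on t w = \<gamma> w)"
    unfolding g_on_def by (rule someI[where P = "\<lambda>f. affine_map f \<and> (\<forall>w\<in>t. f w = \<gamma> w)"])
  then show "affine_map (g_on t)" "\<And>w. w \<in> t \<Longrightarrow> g_on t w = \<gamma> w" by blast+
qed

lemma g_inv: assumes "t \<in> Ks" shows "affine_map (g_inv t)" "\<And>w. w \<in> t \<Longrightarrow> g_inv t (\<gamma> w) = w"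
proof -
  obtain f where "affine_map f" "\<And>z. z \<in> \<gamma> ` t \<Longrightarrow> f z = inv_into t \<gamma> z"
    by (rule affine_map_extend[where \<phi> = "inv_into t \<gamma>", OF simplicial_complexD(4)[OF K_complex image_simplex[OF assms]]]) blast
  then have "affine_map f \<and> (\<forall>w\<in>t. f (\<gamma> w) = w)"
    using inv_into_f_f[OF inj_on_simplex[OF assms]] by simp
  then have "affine_map (g_inv t) \<and> (\<forall>w\<in>t. g_inv t (\<gamma> w) = w)"
    unfolding g_inv_def by (rule someI[where P = "\<lambda>f. affine_map f \<and> (\<forall>w\<in>t. f (\<gamma> w) = w)"])
  then show "affine_map (g_inv t)" "\<And>w. w \<in> t \<Longrightarrow> g_inv t (\<gamma> w) = w" by blast+
qed

lemma g_eq_g_on: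
  assumes t: "t \<in> Ks" and x: "x \<in> convex hull t" shows "g x = g_on t x"
proof -
  obtain u where u: "convex_coords t x u"
    using x convex_hull_iff_convex_coords simplicial_complexD(2)[OF Ks_complex t] by blast
  then have "sum u t = 1" "x = (\<Sum>w\<in>t. u w *\<^sub>R w)" unfolding convex_coords_def by auto
  then have "g_on t x = (\<Sum>w\<in>t. u w *\<^sub>R g_on t w)"
    using affine_map_sum[OF g_on(1)[OF t], of u t "\<lambda>w. w"] by simp
  then show ?thesis using g_convex_coords[OF t u] g_on(2)[OF t] by simp
qed

lemma g_inv_g:
  assumes t: "t \<in> Ks" and x: "x \<in> convex hull t" shows "g_inv t (g x) = x"
proof -
  obtain u where u: "convex_coords t x u"
    using x convex_hull_iff_convex_coords simplicial_complexD(2)[OF Ks_complex t] by blast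
  then have "sum u t = 1" unfolding convex_coords_def by simp
  then have "g_inv t (g x) = (\<Sum>w\<in>t. u w *\<^sub>R g_inv t (\<gamma> w))"
    unfolding g_convex_coords[OF t u] by (rule affine_map_sum[OF g_inv(1)[OF t]])
  also have "\<dots> = x" using u g_inv(2)[OF t] unfolding convex_coords_def by simp
  finally show ?thesis .
qed

lemma g_inv_in_convex_hull:
  assumes t: "t \<in> Ks" and y: "y \<in> convex hull (\<gamma> ` t)"
  shows "g_inv t y \<in> convex hull t" "g (g_inv t y) = y"
proof -
  have fin: "finite t" using simplicial_complexD(2)[OF Ks_complex t] .
  obtain b where b: "\<forall>z\<in>\<gamma> ` t. 0 \<le> b z" "sum b (\<gamma> ` t) = 1" "(\<Sum>z\<in>\<gamma> ` t. b z *\<^sub>R z) = y"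
    using y fin convex_hull_iff_convex_coords[of "\<gamma> ` t"] unfolding convex_coords_def by auto
  define x where "x = (\<Sum>w\<in>t. b (\<gamma> w) *\<^sub>R w)"
  have reindex: "sum b (\<gamma> ` t) = (\<Sum>w\<in>t. b (\<gamma> w))"
    "(\<Sum>z\<in>\<gamma> ` t. b z *\<^sub>R z) = (\<Sum>w\<in>t. b (\<gamma> w) *\<^sub>R \<gamma> w)"
    using sum.reindex[OF inj_on_simplex[OF t]] by (simp_all add: o_def)
  have u: "convex_coords t x (\<lambda>w. b (\<gamma> w))"
    using b(1,2) reindex(1) unfolding convex_coords_def x_def by simp
  have gx: "g x = y" using g_convex_coords[OF t u] b(3) reindex(2) by simp
  have x: "x \<in> convex hull t" using u fin convex_hull_iff_convex_coords by blast
  then show "g_inv t y \<in> convex hull t" "g (g_inv t y) = y" using g_inv_g[OF t x] gx by auto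
qed

lemma continuous_on_g: "continuous_on X g"
  unfolding X_eq_Union
proof (rule continuous_on_closed_Union)
  show "continuous_on (convex hull t) g" if "t \<in> Ks" for t
    by (rule continuous_on_eq[OF continuous_on_affine_map[OF g_on(1)[OF that]]])
      (simp add: g_eq_g_on[OF that])
qed (use simplicial_complexD(1)[OF Ks_complex] simplicial_complex_closed_simplex[OF Ks_complex] in auto)

lemma simplex_contracting_into_simplex:
  assumes t: "t \<in> Ks" and S: "S \<in> K" and sub: "convex hull t \<subseteq> convex hull S"
  obtains c where "0 \<le> c" "c < 1" "contracting_into c (convex hull t) (convex hull S)"
proof (rule convex_hull_contracting_into)
  show "finite t" "t \<noteq> {}" "finite S"
    using simplicial_complexD(2,3)[OF Ks_complex t] simplicial_complexD(2)[OF K_complex S] by auto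
  show "t \<subseteq> convex hull S" by (rule order_trans[OF hull_subset sub])
  fix F1 F2 assume F: "F1 \<subseteq> S" "F2 \<subseteq> S" "F1 \<noteq> {}" "F2 \<noteq> {}" "F1 \<inter> F2 = {}"
  then have "F1 \<in> K" "F2 \<in> K" using simplicial_complexD(5)[OF K_complex S] by blast+
  moreover have "convex hull F1 \<inter> convex hull F2 = {}"
    using simplicial_complexD(6)[OF K_complex \<open>F1 \<in> K\<close> \<open>F2 \<in> K\<close>] F(5) by simp
  ultimately show "convex hull t \<inter> convex hull F1 = {} \<or> convex hull t \<inter> convex hull F2 = {}"
    using Ks_proper[OF t] by blast
qed

definition contraction :: real where
  "contraction = (SOME c. 0 \<le> c \<and> c < 1 \<and> (\<forall>t\<in>Ks. \<forall>S\<in>K. convex hull t \<subseteq> convex hull S \<longrightarrow>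
      contracting_into c (convex hull t) (convex hull S)))"

lemma contraction_exists:
  "\<exists>c. 0 \<le> c \<and> c < 1 \<and> (\<forall>t\<in>Ks. \<forall>S\<in>K. convex hull t \<subseteq> convex hull S \<longrightarrow>
      contracting_into c (convex hull t) (convex hull S))"
proof -
  define P where "P = {(t, S). t \<in> Ks \<and> S \<in> K \<and> convex hull t \<subseteq> convex hull S}"
  have "\<exists>c. 0 \<le> c \<and> c < 1 \<and> contracting_into c (convex hull fst p) (convex hull snd p)"
    if pP: "p \<in> P" for p
  proof -
    obtain t S where p: "p = (t, S)" "t \<in> Ks" "S \<in> K" "convex hull t \<subseteq> convex hull S"
      using pP unfolding P_def by auto
    obtain c where "0 \<le> c" "c < 1" "contracting_into c (convex hull t) (convex hull S)"
      by (rule simplex_contracting_into_simplex[OF p(2-4)])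
    then show ?thesis unfolding p(1) by auto
  qed
  then have "\<forall>p\<in>P. \<exists>c. 0 \<le> c \<and> c < 1 \<and> contracting_into c (convex hull fst p) (convex hull snd p)"
    by blast
  from bchoice[OF this] obtain cf where cf: "\<forall>p\<in>P. 0 \<le> cf p \<and> cf p < 1 \<and>
      contracting_into (cf p) (convex hull fst p) (convex hull snd p)"
    by blast
  have "P \<subseteq> Ks \<times> K" unfolding P_def by auto
  then have "finite P"
    using simplicial_complexD(1)[OF Ks_complex] simplicial_complexD(1)[OF K_complex] finite_subset by blast
  define c where "c = Max (insert 0 (cf ` P))"
  have "0 \<le> c" unfolding c_def using \<open>finite P\<close> by simp
  moreover have "c < 1" unfolding c_def
    by (subst Max_less_iff) (use \<open>finite P\<close> cf in auto)
  moreover have "contracting_into c (convex hull t) (convex hull S)"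
    if "t \<in> Ks" "S \<in> K" "convex hull t \<subseteq> convex hull S" for t S
  proof -
    have p: "(t, S) \<in> P" using that P_def by simp
    have "cf (t, S) \<le> c" using p \<open>finite P\<close> unfolding c_def by simp
    moreover have "0 \<le> cf (t, S)" "contracting_into (cf (t, S)) (convex hull t) (convex hull S)"
      using bspec[OF cf p] by simp_all
    ultimately show ?thesis using contracting_into_mono[OF convex_convex_hull] by blast
  qed
  ultimately show ?thesis by blast
qed

lemma contraction_spec:
  "0 \<le> contraction \<and> contraction < 1 \<and> (\<forall>t\<in>Ks. \<forall>S\<in>K. convex hull t \<subseteq> convex hull S \<longrightarrow>
      contracting_into contraction (convex hull t) (convex hull S))"
  unfolding contraction_def by (rule someI_ex[OF contraction_exists])

lemma contraction_nonneg: "0 \<le> contraction"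
  and contraction_less_one: "contraction < 1"
  using contraction_spec by simp_all

lemma contracting_into_contraction:
  "t \<in> Ks \<Longrightarrow> S \<in> K \<Longrightarrow> convex hull t \<subseteq> convex hull S \<Longrightarrow>
    contracting_into contraction (convex hull t) (convex hull S)"
  using contraction_spec by simp

definition cyl :: "'a set list \<Rightarrow> 'a set" where
  "cyl w = {x \<in> X. \<forall>j<length w. (g ^^ j) x \<in> convex hull (w ! j)}"

definition admissible :: "'a set list \<Rightarrow> bool" where
  "admissible w \<longleftrightarrow> set w \<subseteq> Ks \<and> successively (\<lambda>t t'. convex hull t' \<subseteq> convex hull (\<gamma> ` t)) w"

lemma cyl_Nil: "cyl [] = X"
  unfolding cyl_def by simp

lemma cyl_Cons: "x \<in> cyl (t # w) \<longleftrightarrow> x \<in> X \<and> x \<in> convex hull t \<and> g x \<in> cyl w"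
proof -
  have "(\<forall>j<length (t # w). (g ^^ j) x \<in> convex hull ((t # w) ! j)) \<longleftrightarrow>
      x \<in> convex hull t \<and> (\<forall>j<length w. (g ^^ j) (g x) \<in> convex hull (w ! j))"
    by (auto simp: less_Suc_eq_0_disj funpow_Suc_right simp del: funpow.simps)
  then show ?thesis unfolding cyl_def using g_in_X by auto
qed

lemma cyl_subset: "cyl w \<subseteq> X"
  unfolding cyl_def by blast

lemma cyl_append_subset: "cyl (w @ v) \<subseteq> cyl w"
  unfolding cyl_def by (auto simp: nth_append)

lemma admissible_Cons:
  "admissible (t # w) \<longleftrightarrow> t \<in> Ks \<and> admissible w \<and> (w \<noteq> [] \<longrightarrow> convex hull (hd w) \<subseteq> convex hull (\<gamma> ` t))"
  unfolding admissible_def by (auto simp: successively_Cons)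

primrec pullback :: "'a set list \<Rightarrow> 'a \<Rightarrow> 'a" where
  "pullback [] = id"
| "pullback (t # w) = g_inv t \<circ> pullback w"

primrec pushforward :: "'a set list \<Rightarrow> 'a \<Rightarrow> 'a" where
  "pushforward [] = id"
| "pushforward (t # w) = pushforward w \<circ> g_on t"

lemma affine_map_pullback: "set w \<subseteq> Ks \<Longrightarrow> affine_map (pullback w)"
  by (induction w) (auto simp: affine_map_id[unfolded id_def[symmetric]] intro: affine_map_comp g_inv)

lemma affine_map_pushforward: "set w \<subseteq> Ks \<Longrightarrow> affine_map (pushforward w)"
  by (induction w) (auto simp: affine_map_id[unfolded id_def[symmetric]] intro: affine_map_comp g_on)

lemma pullback_funpow: "set w \<subseteq> Ks \<Longrightarrow> x \<in> cyl w \<Longrightarrow> pullback w ((g ^^ length w) x) = x"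
proof (induction w arbitrary: x)
  case (Cons t w)
  then show ?case
    using g_inv_g[of t x] by (simp add: cyl_Cons funpow_Suc_right del: funpow.simps)
qed simp

lemma funpow_eq_pushforward: "set w \<subseteq> Ks \<Longrightarrow> x \<in> cyl w \<Longrightarrow> (g ^^ length w) x = pushforward w x"
proof (induction w arbitrary: x)
  case (Cons t w)
  then show ?case
    using g_eq_g_on[of t x] by (simp add: cyl_Cons funpow_Suc_right del: funpow.simps)
qed simp

lemma pullback_in_cyl:
  "admissible (w @ [u]) \<Longrightarrow> y \<in> convex hull u \<Longrightarrow>
    pullback w y \<in> cyl (w @ [u]) \<and> (g ^^ length w) (pullback w y) = y"
proof (induction w arbitrary: y)
  case Nil
  have "u \<in> Ks" using Nil.prems(1) admissible_def by simp
  then have "y \<in> X" using Nil.prems(2) X_eq_Union by blast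
  with Nil show ?case by (simp add: cyl_def)
next
  case (Cons t w)
  let ?z = "pullback w y"
  have t: "t \<in> Ks" and adm: "admissible (w @ [u])"
    and hd: "convex hull (hd (w @ [u])) \<subseteq> convex hull (\<gamma> ` t)"
    using Cons.prems(1) admissible_Cons[of t "w @ [u]"] by auto
  have z: "?z \<in> cyl (w @ [u])" "(g ^^ length w) ?z = y" using Cons.IH[OF adm Cons.prems(2)] by auto
  then have "?z \<in> convex hull (hd (w @ [u]))" by (cases "w @ [u]") (auto simp: cyl_Cons)
  then have "?z \<in> convex hull (\<gamma> ` t)" using hd by blast
  then have x: "g_inv t ?z \<in> convex hull t" "g (g_inv t ?z) = ?z" using g_inv_in_convex_hull[OF t] by auto
  then have "g_inv t ?z \<in> X" using t X_eq_Union by blast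
  then show ?case using x z by (simp add: cyl_Cons funpow_Suc_right del: funpow.simps)
qed

lemma cyl_subset_pullback_image:
  assumes "set w \<subseteq> Ks" shows "cyl (w @ [u]) \<subseteq> pullback w ` (convex hull u)"
proof
  fix x assume x: "x \<in> cyl (w @ [u])"
  then have "x = pullback w ((g ^^ length w) x)"
    using pullback_funpow[OF assms] cyl_append_subset[of w "[u]"] by auto
  moreover have "(g ^^ length w) x \<in> convex hull u" using x unfolding cyl_def by auto
  ultimately show "x \<in> pullback w ` (convex hull u)" by blast
qed

lemma cyl_eq_image: "admissible (w @ [u]) \<Longrightarrow> cyl (w @ [u]) = pullback w ` (convex hull u)"
  using cyl_subset_pullback_image[of w u] pullback_in_cyl[of w u] unfolding admissible_def by auto

lemma aff_dim_cyl_le: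
  assumes "set w \<subseteq> Ks" "u \<in> Ks" shows "aff_dim (cyl (w @ [u])) \<le> int (card u) - 1"
proof -
  have "aff_dim (cyl (w @ [u])) \<le> aff_dim (pullback w ` (convex hull u))"
    by (rule aff_dim_subset[OF cyl_subset_pullback_image[OF assms(1)]])
  also have "\<dots> \<le> aff_dim (convex hull u)"
    by (rule aff_dim_affine_map_image_le[OF affine_map_pullback[OF assms(1)]])
  finally show ?thesis
    using aff_dim_convex_hull_independent[OF simplicial_complexD(4)[OF Ks_complex assms(2)]] by simp
qed

lemma cyl_properties:
  assumes adm: "admissible (w @ [u])" and u: "card u = d + 1"
  shows "cyl (w @ [u]) \<noteq> {}" "compact (cyl (w @ [u]))" "convex (cyl (w @ [u]))"
    "aff_dim (cyl (w @ [u])) = int d"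
proof -
  have w: "set w \<subseteq> Ks" and "u \<in> Ks" using adm admissible_def by auto
  then have u': "finite u" "u \<noteq> {}" "\<not> affine_dependent u" using simplicial_complexD[OF Ks_complex] by auto
  have pb: "affine_map (pullback w)" by (rule affine_map_pullback[OF w])
  show "cyl (w @ [u]) \<noteq> {}" unfolding cyl_eq_image[OF adm] using u'(2) by simp
  show "compact (cyl (w @ [u]))" unfolding cyl_eq_image[OF adm]
    by (rule compact_continuous_image[OF continuous_on_affine_map[OF pb]
          finite_imp_compact_convex_hull[OF u'(1)]])
  show "convex (cyl (w @ [u]))" unfolding cyl_eq_image[OF adm]
    by (rule convex_affine_map_image[OF pb convex_convex_hull])
  have "convex hull u \<subseteq> pushforward w ` cyl (w @ [u])"
  proof
    fix y assume y: "y \<in> convex hull u"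
    then have "pullback w y \<in> cyl (w @ [u])" "(g ^^ length w) (pullback w y) = y"
      using pullback_in_cyl[OF adm] by auto
    then show "y \<in> pushforward w ` cyl (w @ [u])"
      using funpow_eq_pushforward[OF w] cyl_append_subset[of w "[u]"] by (metis image_eqI subsetD)
  qed
  then have "aff_dim (convex hull u) \<le> aff_dim (cyl (w @ [u]))"
    using aff_dim_subset aff_dim_affine_map_image_le[OF affine_map_pushforward[OF w]] order_trans by blast
  then show "aff_dim (cyl (w @ [u])) = int d"
    using aff_dim_cyl_le[OF w \<open>u \<in> Ks\<close>] aff_dim_convex_hull_independent[OF u'(3)] u by simp
qed

lemma closed_X: "closed X"
  by (rule compact_imp_closed[OF compact_X])

lemma closed_cyl: "set w \<subseteq> Ks \<Longrightarrow> closed (cyl w)"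
proof (induction w)
  case (Cons t w)
  have "cyl (t # w) = convex hull t \<inter> (X \<inter> g -` cyl w)"
    using cyl_Cons by blast
  moreover have "closed (X \<inter> g -` cyl w)"
    using Cons by (intro continuous_closed_preimage[OF continuous_on_g closed_X]) auto
  ultimately show ?case
    using simplicial_complex_closed_simplex[OF Ks_complex] Cons.prems by (auto intro: closed_Int)
qed (simp add: cyl_Nil closed_X)

text \<open>Pulling a difference back along the affine inverse of g on t keeps its scale and moves it
  into the simplex t, which the properness estimate contracts once more inside S.\<close>
lemma contracting_into_cyl_Cons:
  assumes t: "t \<in> Ks" and S: "S \<in> K" "convex hull t \<subseteq> convex hull S"
    and w: "contracting_into c (cyl w) (convex hull (\<gamma> ` t))"
  shows "contracting_into (contraction * c) (cyl (t # w)) (convex hull S)"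
  unfolding contracting_into_def
proof (intro ballI)
  fix p q assume pq: "p \<in> cyl (t # w)" "q \<in> cyl (t # w)"
  then have "g p \<in> cyl w" "g q \<in> cyl w" by (simp_all add: cyl_Cons)
  then obtain p' q' where p'q': "p' \<in> convex hull (\<gamma> ` t)" "q' \<in> convex hull (\<gamma> ` t)"
    "g q - g p = c *\<^sub>R (q' - p')"
    using w unfolding contracting_into_def scaled_diff_def by blast
  obtain L where L: "linear L" "\<And>x y. g_inv t x - g_inv t y = L (x - y)"
    using affine_map_diff[OF g_inv(1)[OF t]] by blast
  have "q - p = g_inv t (g q) - g_inv t (g p)" using pq g_inv_g[OF t] by (simp add: cyl_Cons)
  also have "\<dots> = c *\<^sub>R (g_inv t q' - g_inv t p')"
    using p'q'(3) L by (simp add: linear_scale)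
  finally have eq: "q - p = c *\<^sub>R (g_inv t q' - g_inv t p')" .
  have "g_inv t p' \<in> convex hull t" "g_inv t q' \<in> convex hull t"
    using g_inv_in_convex_hull[OF t] p'q'(1,2) by auto
  then obtain p'' q'' where "p'' \<in> convex hull S" "q'' \<in> convex hull S"
    "g_inv t q' - g_inv t p' = contraction *\<^sub>R (q'' - p'')"
    using contracting_into_contraction[OF t S] unfolding contracting_into_def scaled_diff_def by blast
  then show "scaled_diff (contraction * c) (convex hull S) (q - p)"
    unfolding scaled_diff_def eq by (intro bexI[of _ p''] bexI[of _ q'']) (auto simp: mult.commute)
qed

lemma contracting_into_cyl:
  assumes "admissible w" "w \<noteq> []" "S \<in> K" "convex hull (hd w) \<subseteq> convex hull S"
  shows "contracting_into (contraction ^ length w) (cyl w) (convex hull S)"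
  using assms
proof (induction w arbitrary: S)
  case (Cons t w)
  have t: "t \<in> Ks" and adm: "admissible w"
    and hd: "w \<noteq> [] \<Longrightarrow> convex hull (hd w) \<subseteq> convex hull (\<gamma> ` t)"
    using Cons.prems(1) admissible_Cons by auto
  show ?case
  proof (cases "w = []")
    case True
    have "cyl [t] \<subseteq> convex hull t" by (auto simp: cyl_Cons)
    then show ?thesis
      using contracting_into_contraction[OF t Cons.prems(3)] Cons.prems(4) True
      unfolding contracting_into_def by auto
  next
    case False
    then show ?thesis
      using contracting_into_cyl_Cons[OF t Cons.prems(3)] Cons.prems(4)
        Cons.IH[OF adm False image_simplex[OF t] hd[OF False]] by simp
  qed
qed simp

lemma dist_cyl_le:
  assumes adm: "admissible w" and x: "x \<in> cyl w" and y: "y \<in> cyl w"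
  shows "dist x y \<le> contraction ^ length w * diameter X"
proof (cases "w = []")
  case True
  then show ?thesis
    using x y diameter_bounded_bound[OF compact_imp_bounded[OF compact_X]] by (simp add: cyl_Nil)
next
  case False
  then obtain S where S: "S \<in> K" "convex hull (hd w) \<subseteq> convex hull S"
    using Ks_refines adm hd_in_set unfolding admissible_def by blast
  then obtain p q where pq: "p \<in> convex hull S" "q \<in> convex hull S"
    "x - y = contraction ^ length w *\<^sub>R (q - p)"
    using contracting_into_cyl[OF adm False S] x y unfolding contracting_into_def scaled_diff_def by blast
  have "convex hull S \<subseteq> X" using S(1) unfolding polyhedron_def by blast
  then have "dist q p \<le> diameter X"
    using pq diameter_bounded_bound[OF compact_imp_bounded[OF compact_X]] by blast
  then show ?thesis
    using pq(3) contraction_nonneg by (simp add: dist_norm mult_left_mono)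
qed

subsection \<open>The factor map\<close>

definition itinerary :: "(nat \<Rightarrow> 'a set) \<Rightarrow> 'a set" where
  "itinerary s = {x \<in> X. \<forall>i. (g ^^ i) x \<in> convex hull (s i)}"

lemma itinerary_subset_cyl: "itinerary s \<subseteq> cyl (map s [0..<n])"
  unfolding itinerary_def cyl_def by auto

lemma Sig_iff: "s \<in> Sig \<longleftrightarrow> (\<forall>i. s i \<in> D \<and> convex hull (s (Suc i)) \<subseteq> convex hull (\<gamma> ` s i))"
  unfolding shift_space_def Grel_def by auto

lemma admissible_prefix: "s \<in> Sig \<Longrightarrow> admissible (map s [0..<n])"
  unfolding admissible_def Sig_iff successively_conv_nth D_iff by auto

lemma cyl_prefix_Suc:
  assumes "s \<in> Sig"
  shows "cyl (map s [0..<Suc n]) \<noteq> {}" "compact (cyl (map s [0..<Suc n]))"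
    "convex (cyl (map s [0..<Suc n]))" "aff_dim (cyl (map s [0..<Suc n])) = int d"
  using cyl_properties[of "map s [0..<n]" "s n"] admissible_prefix[OF assms, of "Suc n"] assms
  by (simp_all add: Sig_iff D_iff)

lemma cyl_prefix_mono:
  assumes "m \<le> n" shows "cyl (map s [0..<n]) \<subseteq> cyl (map s [0..<m])"
proof -
  have "[0..<n] = [0..<m] @ [m..<n]" using upt_add_eq_append[of 0 m "n - m"] assms by simp
  then show ?thesis using cyl_append_subset[of "map s [0..<m]" "map s [m..<n]"] by simp
qed

lemma itinerary_nonempty: assumes "s \<in> Sig" shows "itinerary s \<noteq> {}"
proof -
  have "\<Inter> (range (\<lambda>n. cyl (map s [0..<Suc n]))) \<noteq> {}"
  proof (rule compact_nest)
    show "compact (cyl (map s [0..<Suc n]))" "cyl (map s [0..<Suc n]) \<noteq> {}" for n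
      by (rule cyl_prefix_Suc[OF assms])+
    show "cyl (map s [0..<Suc n]) \<subseteq> cyl (map s [0..<Suc m])" if "m \<le> n" for m n
      by (rule cyl_prefix_mono) (use that in simp)
  qed
  then obtain x where x: "\<And>n. x \<in> cyl (map s [0..<Suc n])" by blast
  then have "x \<in> X" using cyl_subset by blast
  moreover have "(g ^^ i) x \<in> convex hull (s i)" for i
    using x[of i] unfolding cyl_def by (auto simp del: upt_Suc)
  ultimately show ?thesis unfolding itinerary_def by blast
qed

lemma dist_itinerary_le:
  assumes "s \<in> Sig" "x \<in> itinerary s" "y \<in> itinerary s"
  shows "dist x y \<le> contraction ^ n * diameter X"
  using dist_cyl_le[OF admissible_prefix[OF assms(1)]] itinerary_subset_cyl assms(2,3) by fastforce

lemma itinerary_unique: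
  assumes "s \<in> Sig" "x \<in> itinerary s" "y \<in> itinerary s" shows "x = y"
proof -
  have "(\<lambda>n. contraction ^ n * diameter X) \<longlonglongrightarrow> 0 * diameter X"
    using contraction_nonneg contraction_less_one by (intro tendsto_mult LIMSEQ_power_zero) auto
  then have "dist x y \<le> 0"
    using dist_itinerary_le[OF assms] by (intro LIMSEQ_le_const[of _ 0]) auto
  then show ?thesis by simp
qed

definition factor_map :: "(nat \<Rightarrow> 'a set) \<Rightarrow> 'a" where
  "factor_map s = (THE x. x \<in> itinerary s)"

lemma factor_map_in_itinerary: "s \<in> Sig \<Longrightarrow> factor_map s \<in> itinerary s"
  unfolding factor_map_def using itinerary_nonempty itinerary_unique by (metis all_not_in_conv theI)

lemma itinerary_eq_factor_map: "s \<in> Sig \<Longrightarrow> x \<in> itinerary s \<longleftrightarrow> x = factor_map s"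
  using factor_map_in_itinerary itinerary_unique by blast

lemma factor_map_in_X: "s \<in> Sig \<Longrightarrow> factor_map s \<in> X"
  using factor_map_in_itinerary itinerary_def by blast

lemma factor_map_shift:
  assumes s: "s \<in> Sig" shows "factor_map (shift s) = g (factor_map s)"
proof -
  have "shift s \<in> Sig" using s unfolding Sig_iff shift_def by simp
  moreover have "(g ^^ i) (g (factor_map s)) \<in> convex hull (s (Suc i))" for i
    using factor_map_in_itinerary[OF s] funpow_Suc_right[of i g] unfolding itinerary_def
    by (metis (no_types, lifting) comp_apply mem_Collect_eq)
  then have "g (factor_map s) \<in> itinerary (shift s)"
    using factor_map_in_X[OF s] g_in_X unfolding itinerary_def shift_def by auto
  ultimately show ?thesis using itinerary_eq_factor_map by metis
qed

lemma continuous_map_factor_map: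
  "continuous_map (shift_top D (Grel d Ks \<gamma>)) (top_of_set X) factor_map"
proof (rule continuous_map_into_subtopology)
  show "continuous_map (shift_top D (Grel d Ks \<gamma>)) euclidean factor_map"
  proof (rule continuous_map_shift_top_metric)
    show "(\<lambda>n. contraction ^ Suc n * diameter X) \<longlonglongrightarrow> 0"
      using contraction_nonneg contraction_less_one
      by (intro tendsto_mult_left_zero LIMSEQ_Suc LIMSEQ_power_zero) auto
    fix s s' n assume s: "s \<in> Sig" and s': "s' \<in> Sig" and agree: "\<forall>i\<le>n. s' i = s i"
    have "map s' [0..<Suc n] = map s [0..<Suc n]" using agree by simp
    then have "factor_map s' \<in> cyl (map s [0..<Suc n])"
      using factor_map_in_itinerary[OF s'] itinerary_subset_cyl by (metis subsetD)
    moreover have "factor_map s \<in> cyl (map s [0..<Suc n])"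
      using factor_map_in_itinerary[OF s] itinerary_subset_cyl by blast
    ultimately show "dist (factor_map s') (factor_map s) \<le> contraction ^ Suc n * diameter X"
      using dist_cyl_le[OF admissible_prefix[OF s]] by fastforce
  qed
qed (use factor_map_in_X topspace_shift_top in auto)

lemma graph_factor_map:
  "{(s, x). s \<in> Sig \<and> x \<in> X \<and> (\<forall>i. (g ^^ i) x \<in> convex hull (s i))} = {(s, factor_map s) | s. s \<in> Sig}"
  using itinerary_eq_factor_map unfolding itinerary_def by blast

lemma cover_by_D: assumes x: "x \<in> X" obtains t where "t \<in> D" "x \<in> convex hull t"
proof -
  obtain F where F: "finite F" "\<And>T. T \<in> F \<Longrightarrow> (int d) simplex T" "X = \<Union>F"
    using edim unfolding everywhere_dim_def by blast
  then obtain T where T: "T \<in> F" "x \<in> T" using x by blast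
  obtain t where "t \<in> Ks" "card t = d + 1" "x \<in> convex hull t"
    using fulldim_simplex_cover[OF Ks_complex card_Ks_le] closed_simplex[OF F(2)[OF T(1)]]
      convex_simplex[OF F(2)[OF T(1)]] aff_dim_simplex[OF F(2)[OF T(1)]] F(3) T polyhedron_Ks
    by (metis Union_upper)
  then show ?thesis using that D_iff by blast
qed

text \<open>A d-simplex of K^* meeting T in a d-dimensional set lies in a simplex S of K, and then
  S \<inter> T = T = S.\<close>
lemma cover_by_D_inside:
  assumes T: "T \<in> K" "card T = d + 1" and y: "y \<in> convex hull T"
  obtains t where "t \<in> D" "y \<in> convex hull t" "convex hull t \<subseteq> convex hull T"
proof -
  have T_indep: "\<not> affine_dependent T" using simplicial_complexD(4)[OF K_complex T(1)] .
  obtain t where t: "t \<in> Ks" "card t = d + 1" "y \<in> convex hull t"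
    "aff_dim (convex hull t \<inter> convex hull T) = int d"
    using fulldim_simplex_cover[OF Ks_complex card_Ks_le
        simplicial_complex_closed_simplex[OF K_complex T(1)] convex_convex_hull _ _ y]
      aff_dim_convex_hull_independent[OF T_indep] T(2) polyhedron_Ks
    unfolding polyhedron_def using T(1) by auto
  obtain S where S: "S \<in> K" "convex hull t \<subseteq> convex hull S" using Ks_refines[OF t(1)] by blast
  have "convex hull t \<inter> convex hull T \<subseteq> convex hull (S \<inter> T)"
    using S(2) simplicial_complexD(6)[OF K_complex S(1) T(1)] by blast
  then have "int d \<le> aff_dim (convex hull (S \<inter> T))" using t(4) aff_dim_subset by metis
  moreover have "\<not> affine_dependent (S \<inter> T)" using T_indep affine_dependent_subset by blast
  ultimately have "d + 1 \<le> card (S \<inter> T)" using aff_dim_convex_hull_independent by fastforce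
  then have "T \<subseteq> S"
    using card_subset_eq[of T "S \<inter> T"] card_mono[of T "S \<inter> T"] simplicial_complexD(2)[OF K_complex T(1)] T(2)
    by fastforce
  then have "T = S"
    using card_subset_eq card_mono card_simplex_le_everywhere_dim[OF K_complex edim S(1)]
      simplicial_complexD(2)[OF K_complex S(1)] T(2) by (metis le_antisym)
  then show ?thesis using that t S D_iff by blast
qed

definition next_simplex :: "'a set \<Rightarrow> 'a \<Rightarrow> 'a set" where
  "next_simplex t y = (SOME t'. t' \<in> D \<and> y \<in> convex hull t' \<and> convex hull t' \<subseteq> convex hull (\<gamma> ` t))"

lemma next_simplex:
  assumes t: "t \<in> D" and y: "y \<in> convex hull (\<gamma> ` t)"
  shows "next_simplex t y \<in> D" "y \<in> convex hull (next_simplex t y)"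
    "convex hull (next_simplex t y) \<subseteq> convex hull (\<gamma> ` t)"
proof -
  have "\<gamma> ` t \<in> K" "card (\<gamma> ` t) = d + 1"
    using t image_simplex nd unfolding D_iff non_degenerate_def by auto
  then obtain t' where t': "t' \<in> D \<and> y \<in> convex hull t' \<and> convex hull t' \<subseteq> convex hull (\<gamma> ` t)"
    using cover_by_D_inside[of "\<gamma> ` t" y] y by metis
  have "next_simplex t y \<in> D \<and> y \<in> convex hull (next_simplex t y) \<and>
      convex hull (next_simplex t y) \<subseteq> convex hull (\<gamma> ` t)"
    unfolding next_simplex_def
    by (rule someI[where P = "\<lambda>t'. t' \<in> D \<and> y \<in> convex hull t' \<and> convex hull t' \<subseteq> convex hull (\<gamma> ` t)", OF t'])
  then show "next_simplex t y \<in> D" "y \<in> convex hull (next_simplex t y)"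
    "convex hull (next_simplex t y) \<subseteq> convex hull (\<gamma> ` t)" by blast+
qed

lemma extend_to_itinerary:
  assumes x: "x \<in> cyl w" and adm: "admissible w" and wD: "set w \<subseteq> D" and w: "w \<noteq> []"
  obtains s where "s \<in> Sig" "x \<in> itinerary s" "map s [0..<length w] = w"
proof -
  define s where "s = rec_nat (hd w)
    (\<lambda>i t. if Suc i < length w then w ! Suc i else next_simplex t ((g ^^ Suc i) x))"
  have s_simps: "s 0 = hd w"
    "s (Suc i) = (if Suc i < length w then w ! Suc i else next_simplex (s i) ((g ^^ Suc i) x))" for i
    unfolding s_def by simp_all
  have prefix: "s i = w ! i" if "i < length w" for i
    using that w by (cases i) (simp_all add: s_simps hd_conv_nth)
  have x_cyl: "(g ^^ i) x \<in> convex hull (w ! i)" if "i < length w" for i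
    using x that unfolding cyl_def by auto
  have orbit: "s i \<in> D \<and> (g ^^ i) x \<in> convex hull (s i)" for i
  proof (induction i)
    case 0
    have "hd w \<in> D" using wD w by auto
    then show ?case using w x_cyl[of 0] by (simp add: s_simps hd_conv_nth)
  next
    case (Suc i)
    have "(g ^^ Suc i) x \<in> convex hull (\<gamma> ` s i)"
      using g_convex_hull[of "s i" "(g ^^ i) x"] Suc D_iff by simp
    then show ?case
      using next_simplex[of "s i"] Suc wD x_cyl[of "Suc i"] by (auto simp: s_simps)
  qed
  have step: "convex hull (s (Suc i)) \<subseteq> convex hull (\<gamma> ` s i)" for i
  proof (cases "Suc i < length w")
    case True
    then show ?thesis
      using successively_nth[of "\<lambda>t t'. convex hull t' \<subseteq> convex hull (\<gamma> ` t)" w i]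
        adm prefix[of i] prefix[of "Suc i"]
      unfolding admissible_def by simp
  next
    case False
    have "(g ^^ Suc i) x \<in> convex hull (\<gamma> ` s i)"
      using g_convex_hull[of "s i" "(g ^^ i) x"] orbit[of i] D_iff by simp
    then show ?thesis using next_simplex[of "s i"] orbit[of i] False by (simp add: s_simps)
  qed
  have "s \<in> Sig" using orbit step unfolding Sig_iff by blast
  moreover have "x \<in> itinerary s"
    using orbit x cyl_subset unfolding itinerary_def by blast
  moreover have "map s [0..<length w] = w" by (rule nth_equalityI) (simp_all add: prefix)
  ultimately show ?thesis using that by blast
qed

lemma factor_map_onto: "factor_map ` Sig = X"
proof
  show "factor_map ` Sig \<subseteq> X" using factor_map_in_X by blast
  show "X \<subseteq> factor_map ` Sig"
  proof
    fix x assume x: "x \<in> X"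
    obtain t where t: "t \<in> D" "x \<in> convex hull t" using cover_by_D[OF x] .
    then have "x \<in> cyl [t]" "admissible [t]"
      using x g_in_X by (auto simp: cyl_Cons cyl_Nil admissible_def D_iff)
    then obtain s where "s \<in> Sig" "x \<in> itinerary s"
      using extend_to_itinerary[of x "[t]"] t(1) by auto
    then show "x \<in> factor_map ` Sig" using itinerary_eq_factor_map by blast
  qed
qed

subsection \<open>Generic points\<close>

definition generic :: "'a \<Rightarrow> bool" where
  "generic x \<longleftrightarrow> (\<forall>i. \<forall>u\<in>Ks. card u \<le> d \<longrightarrow> (g ^^ i) x \<notin> convex hull u)"

lemma not_generic_in_cyl:
  assumes x: "x \<in> X" and "\<not> generic x"
  obtains v u where "set v \<subseteq> D" "u \<in> Ks" "card u \<le> d" "x \<in> cyl (v @ [u])"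
proof -
  obtain i u where u: "u \<in> Ks" "card u \<le> d" "(g ^^ i) x \<in> convex hull u"
    using assms(2) unfolding generic_def by blast
  have "\<forall>j. \<exists>t. t \<in> D \<and> (g ^^ j) x \<in> convex hull t"
    using cover_by_D funpow_g_in_X[OF x] by metis
  then obtain T where T: "\<And>j. T j \<in> D \<and> (g ^^ j) x \<in> convex hull (T j)" by metis
  have "x \<in> cyl (map T [0..<i] @ [u])"
    using x T u(3) unfolding cyl_def by (auto simp: nth_append less_Suc_eq)
  then show ?thesis using that[of "map T [0..<i]" u] T u(1,2) by auto
qed

lemma cyl_diff_thin_cyl_open_dense:
  assumes adm: "admissible (w @ [u])" and u: "card u = d + 1"
    and v: "set v \<subseteq> Ks" and u': "u' \<in> Ks" "card u' \<le> d"
  shows "openin (top_of_set (cyl (w @ [u]))) (cyl (w @ [u]) - cyl (v @ [u']))"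
    "closure (cyl (w @ [u]) - cyl (v @ [u'])) = cyl (w @ [u])"
proof -
  let ?P = "cyl (w @ [u])"
  note P = cyl_properties[OF adm u]
  have "closed (cyl (v @ [u']))" using v u' closed_cyl by simp
  then have "openin (top_of_set ?P) (?P - ?P \<inter> cyl (v @ [u']))"
    by (intro openin_diff[OF openin_subtopology_self closedin_closed_Int])
  moreover have "?P - ?P \<inter> cyl (v @ [u']) = ?P - cyl (v @ [u'])" by blast
  ultimately show "openin (top_of_set ?P) (?P - cyl (v @ [u']))" by simp
  have "aff_dim (cyl (v @ [u'])) < aff_dim ?P"
    using aff_dim_cyl_le[OF v u'(1)] u'(2) P(4) by simp
  then show "closure (?P - cyl (v @ [u'])) = ?P"
    using dense_complement_convex_closed P(2,3) compact_imp_closed by blast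
qed

text \<open>Baire category, applied to the countably many cylinders of dimension less than d.  A vertex
  of K^* spans such a cylinder because d \<ge> 1, which keeps the family nonempty.\<close>
lemma generic_in_cyl:
  assumes adm: "admissible (w @ [u])" and wD: "set (w @ [u]) \<subseteq> D"
  obtains x where "x \<in> cyl (w @ [u])" "generic x"
proof -
  let ?P = "cyl (w @ [u])"
  have u: "u \<in> Ks" "card u = d + 1" using wD D_iff by auto
  define Thin where "Thin = {u' \<in> Ks. card u' \<le> d}"
  define \<G> where "\<G> = (\<lambda>(v, u'). ?P - cyl (v @ [u'])) ` (lists D \<times> Thin)"
  have "?P \<subseteq> closure (\<Inter>\<G>)"
  proof (rule Baire)
    show "closed ?P" using cyl_properties(2)[OF adm u(2)] compact_imp_closed by blast
    have "finite D" "finite Thin"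
      using simplicial_complexD(1)[OF Ks_complex] unfolding Thin_def dsimplices_def by simp_all
    then show "countable \<G>"
      unfolding \<G>_def by (intro countable_image countable_SIGMA countable_lists countable_finite)
    fix T assume "T \<in> \<G>"
    then obtain v u' where "set v \<subseteq> Ks" "u' \<in> Ks" "card u' \<le> d" "T = ?P - cyl (v @ [u'])"
      unfolding \<G>_def Thin_def using D_iff by auto
    then show "openin (top_of_set ?P) T \<and> ?P \<subseteq> closure T"
      using cyl_diff_thin_cyl_open_dense[OF adm u(2)] by simp
  qed
  then have "\<Inter>\<G> \<noteq> {}" using cyl_properties(1)[OF adm u(2)] by auto
  then obtain x where x: "x \<in> \<Inter>\<G>" by blast
  obtain v where v: "v \<in> u" using u(1) simplicial_complexD(3)[OF Ks_complex] by blast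
  then have "{v} \<in> Thin"
    using simplicial_complexD(5)[OF Ks_complex u(1), of "{v}"] d1 unfolding Thin_def by simp
  then have "?P - cyl ([] @ [{v}]) \<in> \<G>" unfolding \<G>_def by (intro image_eqI[of _ _ "([], {v})"]) auto
  then have "x \<in> ?P" using x by blast
  moreover have "generic x"
  proof (rule ccontr)
    assume "\<not> generic x"
    then obtain v u' where "set v \<subseteq> D" "u' \<in> Ks" "card u' \<le> d" "x \<in> cyl (v @ [u'])"
      using not_generic_in_cyl cyl_subset \<open>x \<in> ?P\<close> by blast
    moreover have "?P - cyl (v @ [u']) \<in> \<G>" if "set v \<subseteq> D" "u' \<in> Ks" "card u' \<le> d"
      using that unfolding \<G>_def Thin_def by (intro image_eqI[of _ _ "(v, u')"]) auto
    ultimately show False using x by blast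
  qed
  ultimately show ?thesis using that by blast
qed

lemma generic_itinerary_unique:
  assumes x: "generic x" and s: "s \<in> Sig" "x \<in> itinerary s" and s': "s' \<in> Sig" "x \<in> itinerary s'"
  shows "s = s'"
proof
  fix i
  have t: "s i \<in> Ks" "card (s i) = d + 1" "s' i \<in> Ks" "card (s' i) = d + 1"
    using s(1) s'(1) unfolding Sig_iff D_iff by auto
  have "(g ^^ i) x \<in> convex hull (s i \<inter> s' i)"
    using s(2) s'(2) simplicial_complexD(6)[OF Ks_complex t(1,3)] unfolding itinerary_def by blast
  moreover have "s i \<inter> s' i \<in> Ks" if "s i \<inter> s' i \<noteq> {}"
    using simplicial_complexD(5)[OF Ks_complex t(1)] that by blast
  ultimately have "\<not> card (s i \<inter> s' i) \<le> d" using x unfolding generic_def by fastforce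
  moreover have fin: "finite (s i)" "finite (s' i)" using simplicial_complexD(2)[OF Ks_complex] t by auto
  then have "card (s i \<inter> s' i) \<le> d + 1" using card_mono[OF fin(1), of "s i \<inter> s' i"] t(2) by simp
  ultimately have "card (s i \<inter> s' i) = card (s i)" "card (s i \<inter> s' i) = card (s' i)" using t by auto
  then have "s i \<inter> s' i = s i" "s i \<inter> s' i = s' i"
    using card_subset_eq[OF fin(1)] card_subset_eq[OF fin(2)] by auto
  then show "s i = s' i" by (rule trans[OF sym])
qed

lemma fiber_singleton_near:
  assumes s: "s \<in> Sig"
  obtains s' where "s' \<in> Sig" "\<forall>i\<le>n. s' i = s i" "{z \<in> Sig. factor_map z = factor_map s'} = {s'}"
proof -
  let ?w = "map s [0..<Suc n]"
  have adm: "admissible ?w" by (rule admissible_prefix[OF s])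
  have wD: "set ?w \<subseteq> D" using s unfolding Sig_iff by auto
  obtain x where x: "x \<in> cyl ?w" "generic x"
    using generic_in_cyl[of "map s [0..<n]" "s n"] adm wD by auto
  obtain s' where s': "s' \<in> Sig" "x \<in> itinerary s'" "map s' [0..<Suc n] = ?w"
    using extend_to_itinerary[OF x(1) adm wD] by auto
  have "\<forall>i\<le>n. s' i = s i" using s'(3) by (auto simp: map_eq_conv simp del: upt_Suc)
  moreover have x_eq: "x = factor_map s'" using s'(1,2) itinerary_eq_factor_map by blast
  have "z = s'" if z: "z \<in> Sig" "factor_map z = factor_map s'" for z
    using generic_itinerary_unique[OF x(2) z(1) _ s'(1,2)] factor_map_in_itinerary[OF z(1)]
    unfolding z(2) x_eq by blast
  then have "{z \<in> Sig. factor_map z = factor_map s'} = {s'}" using s'(1) by blast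
  ultimately show ?thesis using that s'(1) by blast
qed

lemma almost_one_to_one_factor_map:
  "almost_one_to_one (shift_top D (Grel d Ks \<gamma>)) factor_map"
  unfolding almost_one_to_one_def topspace_shift_top
proof (rule antisym)
  let ?U = "{s \<in> Sig. {z \<in> Sig. factor_map z = factor_map s} = {s}}"
  show "shift_top D (Grel d Ks \<gamma>) closure_of ?U \<subseteq> Sig"
    using closure_of_subset_topspace[of "shift_top D (Grel d Ks \<gamma>)" ?U]
    unfolding topspace_shift_top .
  show "Sig \<subseteq> shift_top D (Grel d Ks \<gamma>) closure_of ?U"
  proof
    fix s assume s: "s \<in> Sig"
    have "\<exists>s'. s' \<in> ?U \<and> s' \<in> T" if T: "s \<in> T" "openin (shift_top D (Grel d Ks \<gamma>)) T" for T
    proof -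
      obtain n where n: "{s' \<in> Sig. \<forall>i\<le>n. s' i = s i} \<subseteq> T"
        using openin_shift_top_imp_cylinder[OF T(2,1)] by blast
      obtain s' where "s' \<in> Sig" "\<forall>i\<le>n. s' i = s i" "{z \<in> Sig. factor_map z = factor_map s'} = {s'}"
        using fiber_singleton_near[OF s] by blast
      then show ?thesis using n by blast
    qed
    then show "s \<in> shift_top D (Grel d Ks \<gamma>) closure_of ?U"
      unfolding in_closure_of topspace_shift_top using s by blast
  qed
qed

end

theorem theorem4p10:
  fixes K Ks :: "'a::euclidean_space set set" and \<gamma> :: "'a \<Rightarrow> 'a" and d :: nat
  assumes sds: "simplicial_dynamical_system Ks K \<gamma>"
    and nd: "non_degenerate Ks \<gamma>"
    and d1: "d \<ge> 1"
    and edim: "everywhere_dim d (polyhedron K)"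
  shows "\<exists>h. {(s, x). s \<in> shift_space (dsimplices d Ks) (Grel d Ks \<gamma>) \<and> x \<in> polyhedron K \<and>
                      (\<forall>i. (pl_map Ks \<gamma> ^^ i) x \<in> convex hull (s i))}
               = {(s, h s) | s. s \<in> shift_space (dsimplices d Ks) (Grel d Ks \<gamma>)} \<and>
             continuous_map (shift_top (dsimplices d Ks) (Grel d Ks \<gamma>)) (top_of_set (polyhedron K)) h \<and>
             h ` shift_space (dsimplices d Ks) (Grel d Ks \<gamma>) = polyhedron K \<and>
             almost_one_to_one (shift_top (dsimplices d Ks) (Grel d Ks \<gamma>)) h \<and>
             (\<forall>s\<in>shift_space (dsimplices d Ks) (Grel d Ks \<gamma>). h (shift s) = pl_map Ks \<gamma> (h s))"
proof -
  interpret nondegenerate_sds K Ks \<gamma> d using sds nd d1 edim by unfold_locales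
  show ?thesis
    using graph_factor_map continuous_map_factor_map factor_map_onto
      almost_one_to_one_factor_map factor_map_shift
    by blast
qed

end
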